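(* Let $h\in\mathbb{R}[x_1,\ldots,x_n]$ be hyperbolic with respect to $\mathbf{e}$, with hyperbolicity cone $\Lambda_{++}=\Lambda_{++}(\mathbf{e})$ and closed cone $\Lambda_+$. If $\mathbf{v}_1,\ldots,\mathbf{v}_m\in\Lambda_+$, then $h[\mathbf{v}_1,\ldots,\mathbf{v}_m]$ is hyperbolic (with respect to $(\mathbf{e},0,\ldots,0)$) with hyperbolicity cone containing $\Lambda_{++}\times(-\mathbb{R}_+^m)$, where $\mathbb{R}_+=[0,\infty)$.
   Context: A homogeneous polynomial $h$ of degree $d$ is hyperbolic with respect to $\mathbf{e}\in\mathbb{R}^n$ if $h(\mathbf{e})\neq0$ and for every $\mathbf{x}\in\mathbb{R}^n$, $t\mapsto h(t\mathbf{e}-\mathbf{x})$ has only real zeros; writing $h(t\mathbf{e}-\mathbf{x})=h(\mathbf{e})\prod_{j=1}^d(t-\lambda_j(\mathbf{x}))$ defines the eigenvalues. The (open) hyperbolicity cone is $\Lambda_{++}(\mathbf{e})=\{\mathbf{x}:\min_j\lambda_j(\mathbf{x})>0\}$ and $\Lambda_+(\mathbf{e})=\{\mathbf{x}:\min_j\lambda_j(\mathbf{x})\geq0\}$. For $\mathbf{v}\in\mathbb{R}^n$, $D_{\mathbf{v}}=\sum_k v_k\partial/\partial x_k$. For $\mathbf{v}_1,\ldots,\mathbf{v}_m\in\mathbb{R}^n$, $h[\mathbf{v}_1,\ldots,\mathbf{v}_m]\in\mathbb{R}[x_1,\ldots,x_n,y_1,\ldots,y_m]$ is defined by $h[\mathbf{v}_1,\ldots,\mathbf{v}_m]=\prod_{j=1}^m(1-y_jD_{\mathbf{v}_j})\,h(\mathbf{x})$.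 *)

theory Defs
  imports "HOL-Analysis.Analysis" "HOL-Computational_Algebra.Polynomial"
begin

definition homog_poly_fun :: "nat \<Rightarrow> ('a::euclidean_space \<Rightarrow> real) \<Rightarrow> bool" where
  "homog_poly_fun d f \<longleftrightarrow>
     (\<exists>c :: ('a \<Rightarrow> nat) \<Rightarrow> real.
        finite {\<alpha>. c \<alpha> \<noteq> 0} \<and>
        (\<forall>\<alpha>. c \<alpha> \<noteq> 0 \<longrightarrow> (\<forall>b. b \<notin> Basis \<longrightarrow> \<alpha> b = 0) \<and> (\<Sum>b\<in>Basis. \<alpha> b) = d) \<and>
        (\<forall>x. f x = (\<Sum>\<alpha>\<in>{\<alpha>. c \<alpha> \<noteq> 0}. c \<alpha> * (\<Prod>b\<in>Basis. (x \<bullet> b) ^ \<alpha> b))))"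

definition hyperbolic :: "('a::euclidean_space \<Rightarrow> real) \<Rightarrow> 'a \<Rightarrow> bool" where
  "hyperbolic h e \<longleftrightarrow>
     (\<exists>d. homog_poly_fun d h) \<and> h e \<noteq> 0 \<and>
     (\<forall>x. \<exists>p :: real poly. (\<forall>t. poly p t = h (t *\<^sub>R e - x)) \<and>
            (\<forall>z::complex. poly (map_poly complex_of_real p) z = 0 \<longrightarrow> z \<in> \<real>))"

definition eigenvalues :: "('a::euclidean_space \<Rightarrow> real) \<Rightarrow> 'a \<Rightarrow> 'a \<Rightarrow> real set" where
  "eigenvalues h e x = {t. h (t *\<^sub>R e - x) = 0}"

definition hcone_open :: "('a::euclidean_space \<Rightarrow> real) \<Rightarrow> 'a \<Rightarrow> 'a set" where
  "hcone_open h e = {x. \<forall>s\<in>eigenvalues h e x. s > 0}"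

definition hcone_closed :: "('a::euclidean_space \<Rightarrow> real) \<Rightarrow> 'a \<Rightarrow> 'a set" where
  "hcone_closed h e = {x. \<forall>s\<in>eigenvalues h e x. s \<ge> 0}"

definition hop :: "('m::finite \<Rightarrow> real^'n) \<Rightarrow> 'm
     \<Rightarrow> ((real^'n) \<times> (real^'m) \<Rightarrow> real) \<Rightarrow> ((real^'n) \<times> (real^'m) \<Rightarrow> real)" where
  "hop vs j F = (\<lambda>z. F z - (snd z $ j) * frechet_derivative F (at z) (vs j, 0))"

text \<open>h[v_1,...,v_m] = prod_j (1 - y_j D_{v_j}) h(x); the operators commute,
  so we apply them along an arbitrary fixed enumeration of the index type.\<close>
definition hbracket :: "(real^'n \<Rightarrow> real) \<Rightarrow> ('m::finite \<Rightarrow> real^'n)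
     \<Rightarrow> ((real^'n) \<times> (real^'m) \<Rightarrow> real)" where
  "hbracket h vs =
     foldr (hop vs) (SOME l. distinct l \<and> set l = (UNIV :: 'm set)) (\<lambda>z. h (fst z))"

end

theory Submission
  imports Defs "HOL-Complex_Analysis.Complex_Analysis"
    "HOL-Computational_Algebra.Fundamental_Theorem_Algebra"
begin

(*
  The factors 1 - y_j D_{v_j} are applied one at a time, so it suffices to show: if F is
  hyperbolic with respect to E = (e, 0), w = (v, 0) lies in its closed cone and b is the
  basis vector of y_j, then G = F - y_j D_w F is hyperbolic with respect to E, and every
  point z of the open cone of F with y_j <= 0 lies in the open cone of G.

  For real x and Im zeta > 0, the polynomial f(s) = F(zeta E - x + s w) has no zeros in the
  closed upper half-plane, so f'(0)/f(0), the sum of -1/beta over its roots beta, has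
  negative imaginary part and G(zeta E - x) = f(0) + (x.b) f'(0) cannot vanish.  For the
  cone, s |-> F(z + s u) has no zeros with Re s >= 0 when u lies in the open cone, hence
  D_u F(z) / F(z) >= 0; with u = w + delta E and delta -> 0 this gives
  F(z) + mu D_w F(z) <> 0 for mu >= 0, which excludes roots t <= 0 of t |-> G(t E - z).

  All these zero-free regions come from Garding's fact that F(y + t u + i s E) <> 0 for
  u in the open cone, s > 0 and Im t >= 0, proved by deforming y to 0 and following the
  zeros with Hurwitz's theorem.
*)

(* A term (c, \<alpha>) stands for c * (\<Prod>b\<in>Basis. (x \<bullet> b) ^ \<alpha> b); reval evaluates a term
   list at a real point, ceval at arbitrary complex coordinates. *)
type_synonym 'a mpoly = "(real \<times> ('a \<Rightarrow> nat)) list"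

definition monomial :: "('a::euclidean_space \<Rightarrow> nat) \<Rightarrow> ('a \<Rightarrow> 'b::comm_ring_1) \<Rightarrow> 'b" where
  "monomial \<alpha> g = (\<Prod>b\<in>Basis. g b ^ \<alpha> b)"

definition ceval :: "'a::euclidean_space mpoly \<Rightarrow> ('a \<Rightarrow> complex) \<Rightarrow> complex" where
  "ceval L g = (\<Sum>(c,\<alpha>)\<leftarrow>L. of_real c * monomial \<alpha> g)"

definition reval :: "'a::euclidean_space mpoly \<Rightarrow> 'a \<Rightarrow> real" where
  "reval L x = (\<Sum>(c,\<alpha>)\<leftarrow>L. c * monomial \<alpha> (\<lambda>b. x \<bullet> b))"

definition ccoords :: "'a::euclidean_space \<Rightarrow> 'a \<Rightarrow> complex" where
  "ccoords x = (\<lambda>b. of_real (x \<bullet> b))"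

definition homogeneous_mpoly :: "'a::euclidean_space mpoly \<Rightarrow> nat \<Rightarrow> bool" where
  "homogeneous_mpoly L d \<longleftrightarrow> (\<forall>(c,\<alpha>)\<in>set L. c \<noteq> 0 \<longrightarrow> (\<Sum>b\<in>Basis. \<alpha> b) = d)"

definition basis_list :: "'a::euclidean_space list" where
  "basis_list = (SOME l. distinct l \<and> set l = Basis)"

lemma distinct_set_basis_list: "distinct (basis_list::'a::euclidean_space list)" "set (basis_list::'a list) = Basis"
proof -
  have "\<exists>l. distinct l \<and> set l = (Basis::'a set)"
    using finite_distinct_list[OF finite_Basis] by blast
  then have "distinct (basis_list::'a list) \<and> set (basis_list::'a list) = Basis"
    unfolding basis_list_def by (rule someI_ex)
  then show "distinct (basis_list::'a::euclidean_space list)" "set (basis_list::'a list) = Basis"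
    by auto
qed

lemma sum_list_basis_list: "(\<Sum>b\<leftarrow>basis_list. f b) = (\<Sum>b\<in>Basis. f b)"
  using distinct_set_basis_list sum_list_distinct_conv_sum_set by metis

lemma ceval_Nil[simp]: "ceval [] g = 0" and ceval_Cons[simp]: "ceval ((c,\<alpha>)#L) g
    = of_real c * monomial \<alpha> g + ceval L g"
  by (simp_all add: ceval_def)

lemma reval_Nil[simp]: "reval [] g = 0" and reval_Cons[simp]: "reval ((c,\<alpha>)#L) g
    = c * monomial \<alpha> (\<lambda>b. g \<bullet> b) + reval L g"
  by (simp_all add: reval_def)

lemma ceval_append[simp]: "ceval (L1 @ L2) g = ceval L1 g + ceval L2 g"
  by (simp add: ceval_def)

lemma reval_append[simp]: "reval (L1 @ L2) g = reval L1 g + reval L2 g"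
  by (simp add: reval_def)

lemma ceval_map: "ceval (map (\<lambda>b. (C b, A b)) xs) X = (\<Sum>b\<leftarrow>xs. of_real (C b) * monomial (A b) X)"
  by (induction xs) auto

lemma reval_map: "reval (map (\<lambda>b. (C b, A b)) xs) x = (\<Sum>b\<leftarrow>xs. C b * monomial (A b) (\<lambda>b. x \<bullet> b))"
  by (induction xs) auto

lemma reval_coeffs_zero: "(\<forall>(c,\<alpha>)\<in>set M. c = 0) \<Longrightarrow> reval M x = 0"
  by (induction M) auto

lemma monomial_of_real: "monomial \<alpha> (\<lambda>b. of_real (f b)) = of_real (monomial \<alpha> f)"
  by (simp add: monomial_def)

lemma ceval_ccoords: "ceval L (ccoords x) = of_real (reval L x)"
  by (induction L) (auto simp: ccoords_def monomial_of_real)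

lemma ceval_cong: "(\<And>b. b \<in> Basis \<Longrightarrow> g b = g' b) \<Longrightarrow> ceval L g = ceval L g'"
  unfolding ceval_def monomial_def by (intro arg_cong[where f=sum_list] map_cong refl) (auto intro!: prod.cong)

lemma cnj_ccoords[simp]: "cnj (ccoords x k) = ccoords x k"
  by (simp add: ccoords_def)

lemma ceval_cnj: "ceval L (\<lambda>b. cnj (g b)) = cnj (ceval L g)"
  by (induction L) (auto simp: monomial_def)

lemma ceval_real_line: "ceval L (\<lambda>k. of_real t * ccoords E k - ccoords x k)
    = of_real (reval L (t *\<^sub>R E - x))"
proof -
  have "ceval L (\<lambda>k. of_real t * ccoords E k - ccoords x k) = ceval L (ccoords (t *\<^sub>R E - x))"
    by (rule ceval_cong) (simp add: ccoords_def inner_diff_left)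
  then show ?thesis by (simp add: ceval_ccoords)
qed

lemma complex_eq_of_real_Re: "Im \<zeta> = 0 \<Longrightarrow> \<zeta> = of_real (Re \<zeta>)"
  by (simp add: complex_eq_iff)

lemma monomial_scale: "monomial \<alpha> (\<lambda>b. k * g b) = k ^ (\<Sum>b\<in>Basis. \<alpha> b) * monomial \<alpha> g"
  by (simp add: monomial_def power_mult_distrib prod.distrib power_sum)

lemma homogeneous_mpoly_Cons: "homogeneous_mpoly ((c,\<alpha>)#L) d \<longleftrightarrow> (c \<noteq> 0 \<longrightarrow> (\<Sum>b\<in>Basis. \<alpha> b) = d)
    \<and> homogeneous_mpoly L d"
  by (auto simp: homogeneous_mpoly_def)

lemma ceval_homogeneous: "homogeneous_mpoly L d \<Longrightarrow> ceval L (\<lambda>b. k * g b) = k ^ d * ceval L g"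
  by (induction L) (auto simp: homogeneous_mpoly_Cons monomial_scale algebra_simps)

lemma reval_homogeneous: "homogeneous_mpoly L d \<Longrightarrow> reval L (k *\<^sub>R x) = k ^ d * reval L x"
proof (induction L)
  case (Cons a L) then show ?case
    using monomial_scale[of _ k "\<lambda>b. x \<bullet> b"]
    by (cases a) (auto simp: homogeneous_mpoly_Cons algebra_simps)
qed simp

lemma ceval_scaled_ccoords: "homogeneous_mpoly L d \<Longrightarrow> ceval L (\<lambda>k. a * ccoords x k)
    = a ^ d * of_real (reval L x)"
  using ceval_homogeneous[of L d a "ccoords x"] by (simp add: ceval_ccoords)

lemma ceval_degree_0: "homogeneous_mpoly L 0 \<Longrightarrow> ceval L g = ceval L g'"
proof (induction L)
  case (Cons a L) then show ?case
    by (cases a) (auto simp: homogeneous_mpoly_Cons monomial_def)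
qed simp

lemma reval_degree_0: "homogeneous_mpoly L 0 \<Longrightarrow> reval L x = reval L y"
  using ceval_degree_0[of L "ccoords x" "ccoords y"] by (simp add: ceval_ccoords)

section \<open>Restriction to lines\<close>

definition line_cpoly :: "'a::euclidean_space mpoly \<Rightarrow> ('a \<Rightarrow> complex) \<Rightarrow> ('a \<Rightarrow> complex) \<Rightarrow> complex poly" where
  "line_cpoly L A W = (\<Sum>(c,\<alpha>)\<leftarrow>L. smult (of_real c) (\<Prod>b\<in>Basis. [:A b, W b:] ^ \<alpha> b))"

definition line_rpoly :: "'a::euclidean_space mpoly \<Rightarrow> 'a \<Rightarrow> 'a \<Rightarrow> real poly" where
  "line_rpoly L a w = (\<Sum>(c,\<alpha>)\<leftarrow>L. smult c (\<Prod>b\<in>Basis. [:a \<bullet> b, w \<bullet> b:] ^ \<alpha> b))"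

lemma poly_line_cpoly: "poly (line_cpoly L A W) z = ceval L (\<lambda>b. A b + z * W b)"
  by (induction L) (auto simp: line_cpoly_def poly_prod monomial_def algebra_simps)

lemma poly_line_rpoly: "poly (line_rpoly L a w) t = reval L (a + t *\<^sub>R w)"
  by (induction L) (auto simp: line_rpoly_def poly_prod monomial_def algebra_simps inner_add_left)

lemma poly_eq_on_infinite:
  fixes p q :: "'b::idom poly"
  assumes "infinite S" "\<And>x. x \<in> S \<Longrightarrow> poly p x = poly q x"
  shows "p = q"
proof (rule ccontr)
  assume "p \<noteq> q"
  then have "finite {x. poly (p - q) x = 0}" by (intro poly_roots_finite) simp
  moreover have "S \<subseteq> {x. poly (p - q) x = 0}" using assms(2) by auto
  ultimately show False using assms(1) finite_subset by blast
qed

lemma infinite_Reals: "infinite (\<real> :: complex set)"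
proof
  assume "finite (\<real> :: complex set)"
  then have "finite (Re ` \<real>)" by simp
  moreover have "Re ` \<real> = UNIV"
    by (auto simp: image_iff) (metis Re_complex_of_real Reals_of_real)
  ultimately show False by (simp add: infinite_UNIV_char_0)
qed

lemma poly_map_poly_of_real: "poly (map_poly of_real p) (of_real x)
    = (of_real (poly p x) :: 'a::{real_algebra_1,comm_semiring_0})"
  by (induction p) (auto simp: map_poly_pCons)

lemma poly_map_poly_of_real_line:
  fixes p :: "real poly"
  assumes "\<And>t. poly p t = reval L (a + t *\<^sub>R w)"
  shows "poly (map_poly of_real p) z = ceval L (\<lambda>b. ccoords a b + z * ccoords w b)"
proof -
  have "map_poly of_real p = line_cpoly L (ccoords a) (ccoords w)"
  proof (rule poly_eq_on_infinite[OF infinite_Reals])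
    fix x :: complex assume "x \<in> \<real>"
    then obtain t where x: "x = of_real t" by (auto elim: Reals_cases)
    have "ceval L (\<lambda>b. ccoords a b + x * ccoords w b) = ceval L (ccoords (a + t *\<^sub>R w))"
      by (rule ceval_cong) (simp add: ccoords_def x inner_add_left)
    then show "poly (map_poly of_real p) x = poly (line_cpoly L (ccoords a) (ccoords w)) x"
      by (simp add: x poly_line_cpoly ceval_ccoords assms poly_map_poly_of_real)
  qed
  then show ?thesis by (simp add: poly_line_cpoly)
qed

section \<open>Directional derivatives and the bracket step\<close>

definition mpoly_deriv :: "'a::euclidean_space mpoly \<Rightarrow> 'a \<Rightarrow> 'a mpoly" where
  "mpoly_deriv L w = concat (map (\<lambda>(c,\<alpha>). map (\<lambda>b. (c * real (\<alpha> b) * (w \<bullet> b), \<alpha>(b := \<alpha> b - 1))) basis_list) L)"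

lemma monomial_upd: "b \<in> Basis \<Longrightarrow> monomial (\<alpha>(b := n)) X = X b ^ n * (\<Prod>j\<in>Basis - {b}. X j ^ \<alpha> j)"
  unfolding monomial_def by (subst prod.remove[of _ b]) (auto intro!: prod.cong)

lemma monomial_deriv_sum:
  fixes X W :: "'a::euclidean_space \<Rightarrow> 'b::comm_ring_1"
  shows "(\<Sum>b\<in>Basis. (of_nat (\<alpha> b) * X b ^ (\<alpha> b - 1) * W b) * (\<Prod>j\<in>Basis - {b}. X j ^ \<alpha> j))
       = (\<Sum>b\<in>Basis. of_nat (\<alpha> b) * W b * monomial (\<alpha>(b := \<alpha> b - 1)) X)"
  by (intro sum.cong refl) (simp add: monomial_upd algebra_simps)

lemma mpoly_deriv_Nil[simp]: "mpoly_deriv [] w = []" and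
  mpoly_deriv_Cons: "mpoly_deriv ((c,\<alpha>)#L) w
      = map (\<lambda>b. (c * real (\<alpha> b) * (w \<bullet> b), \<alpha>(b := \<alpha> b - 1))) basis_list @ mpoly_deriv L w"
  by (simp_all add: mpoly_deriv_def)

lemma ceval_mpoly_deriv_Cons: "ceval (mpoly_deriv ((c,\<alpha>)#L) w) X =
    of_real c * (\<Sum>b\<in>Basis. of_nat (\<alpha> b) * ccoords w b * monomial (\<alpha>(b := \<alpha> b - 1)) X)
        + ceval (mpoly_deriv L w) X"
  by (simp add: mpoly_deriv_Cons ceval_map sum_list_basis_list sum_distrib_left ccoords_def algebra_simps)

lemma reval_mpoly_deriv_Cons: "reval (mpoly_deriv ((c,\<alpha>)#L) w) x =
    c * (\<Sum>b\<in>Basis. of_nat (\<alpha> b) * (w \<bullet> b) * monomial (\<alpha>(b := \<alpha> b - 1)) (\<lambda>b. x \<bullet> b))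
        + reval (mpoly_deriv L w) x"
  by (simp add: mpoly_deriv_Cons reval_map sum_list_basis_list sum_distrib_left algebra_simps)

lemma ceval_line_has_field_derivative:
  "((\<lambda>\<beta>. ceval L (\<lambda>k. g k + \<beta> * ccoords w k)) has_field_derivative
      ceval (mpoly_deriv L w) (\<lambda>k. g k + \<beta>0 * ccoords w k)) (at \<beta>0)"
proof (induction L)
  case Nil then show ?case by simp
next
  case (Cons a L)
  obtain c \<alpha> where a: "a = (c, \<alpha>)" by fastforce
  have "((\<lambda>\<beta>. monomial \<alpha> (\<lambda>k. g k + \<beta> * ccoords w k)) has_field_derivative
     (\<Sum>b\<in>Basis. (of_nat (\<alpha> b) * (g b + \<beta>0 * ccoords w b) ^ (\<alpha> b - 1) * ccoords w b) *
        (\<Prod>j\<in>Basis - {b}. (g j + \<beta>0 * ccoords w j) ^ \<alpha> j))) (at \<beta>0)"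
    unfolding monomial_def
    by (rule has_field_derivative_prod) (auto intro!: derivative_eq_intros)
  then have "((\<lambda>\<beta>. monomial \<alpha> (\<lambda>k. g k + \<beta> * ccoords w k)) has_field_derivative
     (\<Sum>b\<in>Basis. of_nat (\<alpha> b) * ccoords w b * monomial (\<alpha>(b := \<alpha> b - 1))
         (\<lambda>k. g k + \<beta>0 * ccoords w k))) (at \<beta>0)"
    by (simp only: monomial_deriv_sum)
  then show ?case
    using Cons by (auto simp: a ceval_mpoly_deriv_Cons intro!: derivative_eq_intros)
qed

lemma poly_pderiv_line_cpoly:
  "poly (pderiv (line_cpoly L g (ccoords w))) \<beta>0
      = ceval (mpoly_deriv L w) (\<lambda>k. g k + \<beta>0 * ccoords w k)"
proof -
  have "((\<lambda>\<beta>. poly (line_cpoly L g (ccoords w)) \<beta>) has_field_derivative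
      ceval (mpoly_deriv L w) (\<lambda>k. g k + \<beta>0 * ccoords w k)) (at \<beta>0)"
    by (simp add: poly_line_cpoly ceval_line_has_field_derivative)
  then show ?thesis using poly_DERIV DERIV_unique by blast
qed

lemma reval_has_derivative: "(reval L has_derivative (\<lambda>v. reval (mpoly_deriv L v) x)) (at x)"
proof (induction L)
  case Nil then show ?case by (simp add: reval_def[abs_def])
next
  case (Cons a L)
  obtain c \<alpha> where a: "a = (c, \<alpha>)" by fastforce
  have "((\<lambda>x. monomial \<alpha> (\<lambda>b. x \<bullet> b)) has_derivative
     (\<lambda>v. \<Sum>b\<in>Basis. (of_nat (\<alpha> b) * (x \<bullet> b) ^ (\<alpha> b - 1) * (v \<bullet> b)) *
        (\<Prod>j\<in>Basis - {b}. (x \<bullet> j) ^ \<alpha> j))) (at x)"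
    unfolding monomial_def
    by (rule has_derivative_prod) (auto intro!: derivative_eq_intros)
  then have "((\<lambda>x. monomial \<alpha> (\<lambda>b. x \<bullet> b)) has_derivative
     (\<lambda>v. \<Sum>b\<in>Basis. of_nat (\<alpha> b) * (v \<bullet> b) * monomial (\<alpha>(b := \<alpha> b - 1)) (\<lambda>b. x \<bullet> b))) (at x)"
    by (simp only: monomial_deriv_sum)
  moreover have "reval (a # L) = (\<lambda>x. c * monomial \<alpha> (\<lambda>b. x \<bullet> b) + reval L x)"
    by (auto simp: a)
  ultimately show ?case
    using Cons by (auto simp: a reval_mpoly_deriv_Cons intro!: derivative_eq_intros)
qed

lemma frechet_derivative_reval: "frechet_derivative (reval L) (at x) v = reval (mpoly_deriv L v) x"
  using frechet_derivative_at[OF reval_has_derivative[of L x]] by metis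

lemma reval_mpoly_deriv_add_scaleR: "reval (mpoly_deriv L (w + \<delta> *\<^sub>R v)) x
    = reval (mpoly_deriv L w) x + \<delta> * reval (mpoly_deriv L v) x"
proof (induction L)
  case (Cons a L)
  obtain c \<alpha> where a: "a = (c, \<alpha>)" by fastforce
  show ?case using Cons
    by (simp add: a reval_mpoly_deriv_Cons sum.distrib sum_distrib_left distrib_left mult_ac,
        subst sum.distrib[symmetric], intro sum.cong refl, simp add: inner_add_left algebra_simps)
qed simp

lemma mpoly_deriv_mem:
  assumes "(c, \<alpha>) \<in> set (mpoly_deriv L w)"
  shows "\<exists>c0 \<alpha>0 b. (c0, \<alpha>0) \<in> set L \<and> b \<in> Basis \<and>
      c = c0 * real (\<alpha>0 b) * (w \<bullet> b) \<and> \<alpha> = \<alpha>0(b := \<alpha>0 b - 1)"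
  using assms by (fastforce simp: mpoly_deriv_def distinct_set_basis_list)

lemma sum_fun_upd_Basis:
  fixes \<alpha> :: "'a::euclidean_space \<Rightarrow> nat"
  assumes "b \<in> Basis"
  shows "(\<Sum>k\<in>Basis. (\<alpha>(b := n)) k) + \<alpha> b = (\<Sum>k\<in>Basis. \<alpha> k) + n"
proof -
  have "(\<Sum>k\<in>Basis. (\<alpha>(b := n)) k) = n + (\<Sum>k\<in>Basis - {b}. \<alpha> k)"
    using assms by (subst sum.remove[of _ b]) (auto intro!: sum.cong)
  moreover have "(\<Sum>k\<in>Basis. \<alpha> k) = \<alpha> b + (\<Sum>k\<in>Basis - {b}. \<alpha> k)"
    using assms by (subst sum.remove[of _ b]) auto
  ultimately show ?thesis by simp
qed

lemma homogeneous_mpoly_deriv_term: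
  assumes V: "homogeneous_mpoly L d" and m: "(c, \<alpha>) \<in> set (mpoly_deriv L w)" and c: "c \<noteq> 0"
  shows "d \<ge> 1 \<and> (\<Sum>b\<in>Basis. \<alpha> b) = d - 1"
proof -
  obtain c0 \<alpha>0 b where m0: "(c0, \<alpha>0) \<in> set L" and b: "b \<in> Basis"
    and ce: "c = c0 * real (\<alpha>0 b) * (w \<bullet> b)" and ae: "\<alpha> = \<alpha>0(b := \<alpha>0 b - 1)"
    using mpoly_deriv_mem[OF m] by blast
  have "c0 \<noteq> 0" "\<alpha>0 b \<noteq> 0" using c ce by auto
  then have s: "(\<Sum>k\<in>Basis. \<alpha>0 k) = d" using V m0 by (auto simp: homogeneous_mpoly_def)
  have "\<alpha>0 b \<le> (\<Sum>k\<in>Basis. \<alpha>0 k)" using b by (intro member_le_sum) auto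
  moreover have "(\<Sum>k\<in>Basis. \<alpha> k) + \<alpha>0 b = (\<Sum>k\<in>Basis. \<alpha>0 k) + (\<alpha>0 b - 1)"
    unfolding ae by (rule sum_fun_upd_Basis[OF b])
  ultimately show ?thesis using s \<open>\<alpha>0 b \<noteq> 0\<close> by auto
qed

lemma homogeneous_mpoly_deriv: "homogeneous_mpoly L d \<Longrightarrow> homogeneous_mpoly (mpoly_deriv L w) (d - 1)"
  unfolding homogeneous_mpoly_def[of "mpoly_deriv L w"]
proof (intro ballI)
  fix p assume V: "homogeneous_mpoly L d" and p: "p \<in> set (mpoly_deriv L w)"
  obtain c \<alpha> where p0: "p = (c, \<alpha>)" by fastforce
  show "case p of (c, \<alpha>) \<Rightarrow> c \<noteq> 0 \<longrightarrow> sum \<alpha> Basis = d - 1"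
    using homogeneous_mpoly_deriv_term[OF V p[unfolded p0]] by (simp add: p0)
qed

lemma reval_mpoly_deriv_degree_0:
  assumes V: "homogeneous_mpoly L 0" shows "reval (mpoly_deriv L w) x = 0"
proof (rule reval_coeffs_zero, intro ballI)
  fix p assume p: "p \<in> set (mpoly_deriv L w)"
  obtain c \<alpha> where p0: "p = (c, \<alpha>)" by fastforce
  show "case p of (c, \<alpha>) \<Rightarrow> c = 0"
    using homogeneous_mpoly_deriv_term[OF V p[unfolded p0]] by (auto simp: p0)
qed

(* F - x_b D_w F; for b the basis vector of y_j and w = (v_j, 0) this is the factor
   (1 - y_j D_{v_j}) of h[v_1, ..., v_m]. *)
definition bracket_step :: "'a::euclidean_space mpoly \<Rightarrow> 'a \<Rightarrow> 'a \<Rightarrow> 'a mpoly" where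
  "bracket_step L w bl = L @ map (\<lambda>(c,\<alpha>). (- c, \<alpha>(bl := Suc (\<alpha> bl)))) (mpoly_deriv L w)"

lemma monomial_Suc: "b \<in> Basis \<Longrightarrow> monomial (\<alpha>(b := Suc (\<alpha> b))) X = X b * monomial \<alpha> X"
  using monomial_upd[of b \<alpha> "Suc (\<alpha> b)" X] monomial_upd[of b \<alpha> "\<alpha> b" X] by simp

lemma reval_shift_exponent: "bl \<in> Basis \<Longrightarrow>
   reval (map (\<lambda>(c,\<alpha>). (- c, \<alpha>(bl := Suc (\<alpha> bl)))) M) x = - (x \<bullet> bl) * reval M x"
proof (induction M)
  case (Cons a M)
  obtain c \<alpha> where a: "a = (c, \<alpha>)" by fastforce
  show ?case using Cons(1)[OF Cons(2)]
    by (simp only: a list.map prod.case reval_Cons monomial_Suc[OF Cons(2)]) (simp add: algebra_simps)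
qed simp

lemma ceval_shift_exponent: "bl \<in> Basis \<Longrightarrow>
   ceval (map (\<lambda>(c,\<alpha>). (- c, \<alpha>(bl := Suc (\<alpha> bl)))) M) g = - g bl * ceval M g"
proof (induction M)
  case (Cons a M)
  obtain c \<alpha> where a: "a = (c, \<alpha>)" by fastforce
  show ?case using Cons(1)[OF Cons(2)]
    by (simp only: a list.map prod.case ceval_Cons monomial_Suc[OF Cons(2)]) (simp add: algebra_simps)
qed simp

lemma reval_bracket_step: "bl \<in> Basis \<Longrightarrow> reval (bracket_step L w bl) x
    = reval L x - (x \<bullet> bl) * reval (mpoly_deriv L w) x"
  by (simp add: bracket_step_def reval_shift_exponent)

lemma ceval_bracket_step: "bl \<in> Basis \<Longrightarrow> ceval (bracket_step L w bl) g
    = ceval L g - g bl * ceval (mpoly_deriv L w) g"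
  by (simp add: bracket_step_def ceval_shift_exponent)

lemma homogeneous_mpoly_bracket_step:
  assumes V: "homogeneous_mpoly L d" and bl: "bl \<in> Basis"
  shows "homogeneous_mpoly (bracket_step L w bl) d"
  unfolding homogeneous_mpoly_def
proof (intro ballI)
  fix p assume "p \<in> set (bracket_step L w bl)"
  then consider "p \<in> set L" | c \<alpha> where "(c, \<alpha>) \<in> set (mpoly_deriv L w)" "p
      = (- c, \<alpha>(bl := Suc (\<alpha> bl)))"
    by (auto simp: bracket_step_def)
  then show "case p of (c, \<alpha>) \<Rightarrow> c \<noteq> 0 \<longrightarrow> sum \<alpha> Basis = d"
  proof cases
    case 1 then show ?thesis using V by (auto simp: homogeneous_mpoly_def)
  next
    case 2
    show ?thesis
    proof (cases "c = 0")
      case False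
      then have "d \<ge> 1" "(\<Sum>b\<in>Basis. \<alpha> b) = d - 1" using homogeneous_mpoly_deriv_term[OF V 2(1)]
        by auto
      moreover have "(\<Sum>k\<in>Basis. (\<alpha>(bl := Suc (\<alpha> bl))) k) + \<alpha> bl = (\<Sum>k\<in>Basis. \<alpha> k) + Suc (\<alpha> bl)"
        by (rule sum_fun_upd_Basis[OF bl])
      ultimately show ?thesis using 2(2) by auto
    qed (use 2 in simp)
  qed
qed

section \<open>Logarithmic derivatives of univariate polynomials\<close>

lemma complex_poly_linear_factor:
  fixes f :: "complex poly"
  assumes "degree f > 0"
  obtains \<beta> g where "poly f \<beta> = 0" "f = [:-\<beta>, 1:] * g" "degree g < degree f" "g \<noteq> 0"
proof -
  have "\<not> constant (poly f)" using assms constant_degree[of f] by simp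
  then obtain \<beta> where r: "poly f \<beta> = 0" using Fundamental_Theorem_Algebra.fundamental_theorem_of_algebra by blast
  have "[:-\<beta>, 1:] dvd f" using r poly_eq_0_iff_dvd by blast
  then obtain g where f: "f = [:-\<beta>, 1:] * g" by (elim dvdE)
  have "f \<noteq> 0" using assms by auto
  then have "g \<noteq> 0" using f by auto
  have "degree f = degree [:-\<beta>, 1:] + degree g" unfolding f
    by (rule degree_mult_eq) (use \<open>g \<noteq> 0\<close> in auto)
  then have "degree f = 1 + degree g" by simp
  then show ?thesis using that[OF r f _ \<open>g \<noteq> 0\<close>] by linarith
qed

lemma log_deriv_linear_factor:
  fixes g :: "complex poly"
  assumes "\<beta> \<noteq> 0" "poly g 0 \<noteq> 0"
  shows "poly (pderiv ([:-\<beta>, 1:] * g)) 0 / poly ([:-\<beta>, 1:] * g) 0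
      = - 1 / \<beta> + poly (pderiv g) 0 / poly g 0"
proof -
  have d: "pderiv [:-\<beta>, 1:] = 1" by (simp add: pderiv_pCons)
  have "poly (pderiv ([:-\<beta>, 1:] * g)) 0 = - \<beta> * poly (pderiv g) 0 + poly g 0"
    by (simp only: pderiv_mult d poly_add poly_mult) simp
  moreover have "poly ([:-\<beta>, 1:] * g) 0 = - \<beta> * poly g 0"
    by (simp only: poly_mult) simp
  ultimately show ?thesis using assms by (simp add: field_simps)
qed

(* f'(0)/f(0) is the sum of -1/\<beta> over the roots \<beta> of f. *)
lemma log_deriv_Im_neg:
  fixes f :: "complex poly"
  assumes "\<forall>b. Im b \<ge> 0 \<longrightarrow> poly f b \<noteq> 0"
  shows "degree f = 0 \<or> Im (poly (pderiv f) 0 / poly f 0) < 0"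
  using assms
proof (induction "degree f" arbitrary: f rule: less_induct)
  case less
  show ?case
  proof (cases "degree f = 0")
    case False
    then obtain \<beta> g where r: "poly f \<beta> = 0" and f: "f = [:-\<beta>, 1:] * g"
      and dg: "degree g < degree f" and g0: "g \<noteq> 0" by (auto elim: complex_poly_linear_factor)
    have "Im \<beta> < 0" using less.prems r by (meson not_le)
    then have b0: "\<beta> \<noteq> 0" by auto
    have hg: "\<forall>b. Im b \<ge> 0 \<longrightarrow> poly g b \<noteq> 0" using less.prems f by auto
    then have pg0: "poly g 0 \<noteq> 0" by auto
    have "(Re \<beta>)^2 + (Im \<beta>)^2 > 0" using \<open>Im \<beta> < 0\<close>
      by (simp add: add_nonneg_pos)
    then have im: "Im (- 1 / \<beta>) < 0" using \<open>Im \<beta> < 0\<close>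
      by (simp add: Im_divide divide_neg_pos)
    from less.hyps[OF dg hg] have "degree g = 0 \<or> Im (poly (pderiv g) 0 / poly g 0) < 0" .
    then have "Im (poly (pderiv g) 0 / poly g 0) \<le> 0"
      by (auto simp: pderiv_eq_0_iff[THEN iffD2])
    then show ?thesis using im log_deriv_linear_factor[OF b0 pg0] f by simp
  qed simp
qed

lemma poly_plus_real_pderiv_nonzero:
  fixes f :: "complex poly"
  assumes "\<forall>b. Im b \<ge> 0 \<longrightarrow> poly f b \<noteq> 0"
  shows "poly f 0 + of_real c * poly (pderiv f) 0 \<noteq> 0"
proof
  assume eq: "poly f 0 + of_real c * poly (pderiv f) 0 = 0"
  have f0: "poly f 0 \<noteq> 0" using assms by auto
  from log_deriv_Im_neg[OF assms] show False
  proof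
    assume "degree f = 0"
    then have "pderiv f = 0" by (simp add: pderiv_eq_0_iff)
    then show False using eq f0 by simp
  next
    define X where "X = poly (pderiv f) 0 / poly f 0"
    assume im: "Im (poly (pderiv f) 0 / poly f 0) < 0"
    then have im: "Im X < 0" by (simp add: X_def)
    have "poly f 0 * (1 + of_real c * X) = 0" using eq f0 by (simp add: X_def field_simps)
    then have "1 + of_real c * X = 0" using f0 by simp
    then have "Im (of_real c * X) = 0" "Re (of_real c * X) = -1"
      by (simp_all add: complex_eq_iff)
    then have "c * Im X = 0" "c * Re X = -1" by simp_all
    then show False using im by auto
  qed
qed

lemma log_deriv_Re_nonneg:
  fixes f :: "complex poly"
  assumes "\<forall>b. Re b \<ge> 0 \<longrightarrow> poly f b \<noteq> 0"
  shows "Re (poly (pderiv f) 0 / poly f 0) \<ge> 0"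
  using assms
proof (induction "degree f" arbitrary: f rule: less_induct)
  case less
  show ?case
  proof (cases "degree f = 0")
    case True
    then have "pderiv f = 0" by (simp add: pderiv_eq_0_iff)
    then show ?thesis by simp
  next
    case False
    then obtain \<beta> g where r: "poly f \<beta> = 0" and f: "f = [:-\<beta>, 1:] * g"
      and dg: "degree g < degree f" and g0: "g \<noteq> 0" by (auto elim: complex_poly_linear_factor)
    have "Re \<beta> < 0" using less.prems r by (meson not_le)
    then have b0: "\<beta> \<noteq> 0" by auto
    have hg: "\<forall>b. Re b \<ge> 0 \<longrightarrow> poly g b \<noteq> 0" using less.prems f by auto
    then have pg0: "poly g 0 \<noteq> 0" by auto
    have re: "Re (- 1 / \<beta>) \<ge> 0" using \<open>Re \<beta> < 0\<close>
      by (simp add: Re_divide divide_nonpos_nonneg)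
    from less.hyps[OF dg hg] have "Re (poly (pderiv g) 0 / poly g 0) \<ge> 0" .
    then show ?thesis using re log_deriv_linear_factor[OF b0 pg0] f by simp
  qed
qed

section \<open>Zeros along a homotopy\<close>

lemma continuous_on_ceval:
  assumes "\<And>b. b \<in> Basis \<Longrightarrow> continuous_on S (\<lambda>s. G s b)"
  shows "continuous_on S (\<lambda>s. ceval L (G s))"
proof (induction L)
  case Nil then show ?case by simp
next
  case (Cons a L)
  obtain c \<alpha> where a: "a = (c, \<alpha>)" by fastforce
  show ?case using Cons assms unfolding a ceval_Cons monomial_def
    by (intro continuous_intros) auto
qed

lemma continuous_on_ceval_line:
  fixes A :: "real \<Rightarrow> 'a::euclidean_space \<Rightarrow> complex"
  assumes "\<And>k. k \<in> Basis \<Longrightarrow> continuous_on {0..1} (\<lambda>\<theta>. A \<theta> k)"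
  shows "continuous_on ({0..1::real} \<times> T) (\<lambda>p. ceval L (\<lambda>k. A (fst p) k + snd p * U k))"
proof (rule continuous_on_ceval)
  fix k :: 'a assume k: "k \<in> Basis"
  have "continuous_on ({0..1::real} \<times> T) (\<lambda>p. A (fst p) k)"
    by (rule continuous_on_compose2[OF assms[OF k] continuous_on_fst]) auto
  then show "continuous_on ({0..1::real} \<times> T) (\<lambda>p. A (fst p) k + snd p * U k)"
    by (intro continuous_intros)
qed

lemma continuous_on_ceval_line_reversed:
  fixes A :: "real \<Rightarrow> 'a::euclidean_space \<Rightarrow> complex"
  assumes "\<And>k. k \<in> Basis \<Longrightarrow> continuous_on {0..1} (\<lambda>\<theta>. A \<theta> k)"
  shows "continuous_on ({0..1::real} \<times> T) (\<lambda>p. ceval L (\<lambda>k. snd p * A (fst p) k + U k))"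
proof (rule continuous_on_ceval)
  fix k :: 'a assume k: "k \<in> Basis"
  have "continuous_on ({0..1::real} \<times> T) (\<lambda>p. A (fst p) k)"
    by (rule continuous_on_compose2[OF assms[OF k] continuous_on_fst]) auto
  then show "continuous_on ({0..1::real} \<times> T) (\<lambda>p. snd p * A (fst p) k + U k)"
    by (intro continuous_intros)
qed

(* F(A \<theta> + \<zeta> U) = \<zeta>^d F(A \<theta> / \<zeta> + U), and the second factor is close to F(U) \<noteq> 0 for large
   \<zeta>, uniformly in \<theta>. *)
lemma ceval_line_growth:
  fixes A :: "real \<Rightarrow> 'a::euclidean_space \<Rightarrow> complex"
  assumes V: "homogeneous_mpoly L d" and U: "ceval L U \<noteq> 0"
    and contA: "\<And>k. k \<in> Basis \<Longrightarrow> continuous_on {0..1} (\<lambda>\<theta>. A \<theta> k)"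
  shows "\<exists>R>0. \<exists>c>0. \<forall>\<theta>\<in>{0..1}. \<forall>\<zeta>. norm \<zeta> \<ge> R \<longrightarrow>
            norm (ceval L (\<lambda>k. A \<theta> k + \<zeta> * U k)) \<ge> c * norm \<zeta> ^ d"
proof -
  define Q where "Q = (\<lambda>p::real\<times>complex. ceval L (\<lambda>k. snd p * A (fst p) k + U k))"
  define K where "K = {0..1::real} \<times> cball (0::complex) 1"
  have "continuous_on K Q" unfolding Q_def K_def
    by (rule continuous_on_ceval_line_reversed[OF contA])
  moreover have "compact K" unfolding K_def by (intro compact_Times compact_cball compact_Icc)
  ultimately have uc: "uniformly_continuous_on K Q" by (rule compact_uniformly_continuous)
  define e where "e = norm (ceval L U) / 2"
  have e: "e > 0" using U by (simp add: e_def)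
  obtain \<delta> where \<delta>: "\<delta> > 0" and uc': "\<And>x x'. x \<in> K \<Longrightarrow> x' \<in> K \<Longrightarrow> dist x' x < \<delta> \<Longrightarrow> dist (Q x') (Q x) < e"
    using uc e unfolding uniformly_continuous_on_def by blast
  define \<delta>' where "\<delta>' = min \<delta> 1 / 2"
  have \<delta>': "\<delta>' > 0" "\<delta>' < \<delta>" "\<delta>' < 1" using \<delta> by (auto simp: \<delta>'_def)
  have "\<forall>\<theta>\<in>{0..1}. \<forall>\<zeta>. norm \<zeta> \<ge> 1/\<delta>' \<longrightarrow>
            norm (ceval L (\<lambda>k. A \<theta> k + \<zeta> * U k)) \<ge> e * norm \<zeta> ^ d"
  proof (intro ballI allI impI)
    fix \<theta> :: real and \<zeta> :: complex
    assume th: "\<theta> \<in> {0..1}" and z: "1/\<delta>' \<le> norm \<zeta>"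
    have "1/\<delta>' > 0" using \<delta>' by simp
    then have nz: "norm \<zeta> > 0" using z by linarith
    then have z0: "\<zeta> \<noteq> 0" by auto
    define \<rho> where "\<rho> = 1 / \<zeta>"
    have "norm \<rho> \<le> \<delta>'" using z nz \<delta>' by (simp add: \<rho>_def norm_divide field_simps)
    then have nr: "norm \<rho> < \<delta>" "norm \<rho> \<le> 1" using \<delta>' by auto
    have in1: "(\<theta>, \<rho>) \<in> K" "(\<theta>, 0) \<in> K" using th nr by (auto simp: K_def)
    have "dist (\<theta>, \<rho>) (\<theta>, 0) < \<delta>" using nr by (simp add: dist_Pair_Pair)
    then have "dist (Q (\<theta>, \<rho>)) (Q (\<theta>, 0)) < e" using uc' in1 by blast
    moreover have "Q (\<theta>, 0) = ceval L U" by (simp add: Q_def)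
    moreover have "norm (ceval L U) - norm (Q (\<theta>, \<rho>)) \<le> norm (Q (\<theta>, \<rho>) - ceval L U)"
      using norm_triangle_ineq2[of "ceval L U" "Q (\<theta>, \<rho>)"] by (simp add: norm_minus_commute)
    ultimately have "norm (Q (\<theta>, \<rho>)) \<ge> e" unfolding e_def dist_norm by simp
    have "ceval L (\<lambda>k. A \<theta> k + \<zeta> * U k) = ceval L (\<lambda>k. \<zeta> * (\<rho> * A \<theta> k + U k))"
      by (rule ceval_cong) (simp add: \<rho>_def z0 algebra_simps)
    also have "\<dots> = \<zeta> ^ d * Q (\<theta>, \<rho>)" by (simp add: ceval_homogeneous[OF V] Q_def)
    finally have "norm (ceval L (\<lambda>k. A \<theta> k + \<zeta> * U k)) = norm \<zeta> ^ d * norm (Q (\<theta>, \<rho>))"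
      by (simp add: norm_mult norm_power)
    moreover have "e * norm \<zeta> ^ d \<le> norm (Q (\<theta>, \<rho>)) * norm \<zeta> ^ d"
      using \<open>norm (Q (\<theta>, \<rho>)) \<ge> e\<close> by (intro mult_right_mono) auto
    ultimately show "e * norm \<zeta> ^ d \<le> norm (ceval L (\<lambda>k. A \<theta> k + \<zeta> * U k))"
      by (simp add: mult.commute)
  qed
  then show ?thesis using \<delta>' e by (intro exI[of _ "1/\<delta>'"] exI[of _ e]) auto
qed

lemma uniform_limit_param:
  fixes P :: "real \<times> complex \<Rightarrow> complex"
  assumes contP: "continuous_on ({0..1} \<times> UNIV) P"
    and th: "\<And>n. \<theta>n n \<in> {0..1}" and lim: "\<theta>n \<longlonglongrightarrow> \<theta>0" and th0: "\<theta>0 \<in> {0..1}"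
    and K: "compact K"
  shows "uniform_limit K (\<lambda>n \<zeta>. P (\<theta>n n, \<zeta>)) (\<lambda>\<zeta>. P (\<theta>0, \<zeta>)) sequentially"
proof -
  have "uniformly_continuous_on ({0..1} \<times> K) P"
    by (intro compact_uniformly_continuous compact_Times compact_Icc K continuous_on_subset[OF contP]) auto
  then have uc: "\<forall>e>0. \<exists>d>0. \<forall>x\<in>{0..1} \<times> K. \<forall>x'\<in>{0..1} \<times> K. dist x' x < d \<longrightarrow> dist (P x') (P x) < e"
    unfolding uniformly_continuous_on_def .
  show ?thesis unfolding uniform_limit_iff
  proof (intro allI impI)
    fix e :: real assume e: "e > 0"
    obtain d where d: "d > 0" and dd: "\<forall>x\<in>{0..1} \<times> K. \<forall>x'\<in>{0..1} \<times> K. dist x' x < d \<longrightarrow> dist (P x') (P x) < e"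
      using uc e by blast
    have "\<forall>\<^sub>F n in sequentially. dist (\<theta>n n) \<theta>0 < d" using lim d by (rule tendstoD)
    then show "\<forall>\<^sub>F n in sequentially. \<forall>x\<in>K. dist (P (\<theta>n n, x)) (P (\<theta>0, x)) < e"
    proof (rule eventually_mono)
      fix n assume n: "dist (\<theta>n n) \<theta>0 < d"
      show "\<forall>x\<in>K. dist (P (\<theta>n n, x)) (P (\<theta>0, x)) < e"
      proof
        fix x assume x: "x \<in> K"
        have "dist (\<theta>n n, x) (\<theta>0, x) < d" using n by (simp add: dist_Pair_Pair)
        then show "dist (P (\<theta>n n, x)) (P (\<theta>0, x)) < e" using dd th th0 x by auto
      qed
    qed
  qed
qed

lemma holomorphic_on_ceval_line: "(\<lambda>\<zeta>. ceval L (\<lambda>k. A k + \<zeta> * U k)) holomorphic_on S"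
proof -
  have "(\<lambda>\<zeta>. poly (line_cpoly L A U) \<zeta>) holomorphic_on S" by (intro holomorphic_intros)
  then show ?thesis by (simp add: poly_line_cpoly)
qed

(* Hurwitz's theorem; the growth bound rules out a constant limit. *)
lemma ceval_line_no_zeros_limit:
  fixes A :: "real \<Rightarrow> 'a::euclidean_space \<Rightarrow> complex"
  assumes V: "homogeneous_mpoly L d" and d: "d \<ge> 1" and U: "ceval L U \<noteq> 0"
    and contA: "\<And>k. k \<in> Basis \<Longrightarrow> continuous_on {0..1} (\<lambda>\<theta>. A \<theta> k)"
    and th: "\<And>n. \<theta>n n \<in> {0..1}" and lim: "\<theta>n \<longlonglongrightarrow> \<theta>0" and th0: "\<theta>0 \<in> {0..1}"
    and nz: "\<And>n \<zeta>. Im \<zeta> > 0 \<Longrightarrow> ceval L (\<lambda>k. A (\<theta>n n) k + \<zeta> * U k) \<noteq> 0"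
    and z: "Im \<zeta> > 0"
  shows "ceval L (\<lambda>k. A \<theta>0 k + \<zeta> * U k) \<noteq> 0"
proof -
  obtain R c where R: "R > 0" and c: "c > 0" and gr: "\<forall>\<theta>\<in>{0..1}. \<forall>\<zeta>. norm \<zeta> \<ge> R \<longrightarrow>
            norm (ceval L (\<lambda>k. A \<theta> k + \<zeta> * U k)) \<ge> c * norm \<zeta> ^ d"
    using ceval_line_growth[OF V U, of A] contA by blast
  define g where "g = (\<lambda>\<zeta>. ceval L (\<lambda>k. A \<theta>0 k + \<zeta> * U k))"
  have nc: "\<not> g constant_on {z. 0 < Im z}"
  proof
    assume "g constant_on {z. 0 < Im z}"
    then obtain y where y: "\<And>z. 0 < Im z \<Longrightarrow> g z = y" by (auto simp: constant_on_def)
    define r where "r = R + norm y / c + 1"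
    have r: "r \<ge> R" "r \<ge> 1" "r > norm y / c" using R c by (auto simp: r_def)
    define z where "z = \<i> * of_real r"
    have nzr: "norm z = r" using r R by (simp add: z_def norm_mult)
    have "Im z > 0" using r R by (simp add: z_def)
    then have "g z = y" by (rule y)
    moreover have "c * norm z ^ d \<le> norm (ceval L (\<lambda>k. A \<theta>0 k + z * U k))"
      using gr th0 r(1) nzr by auto
    ultimately have "norm y \<ge> c * r ^ d" using nzr by (simp add: g_def)
    moreover have "r ^ 1 \<le> r ^ d" by (rule power_increasing[OF d r(2)])
    then have "c * r \<le> c * r ^ d" using c by (simp add: mult_left_mono)
    ultimately have "norm y \<ge> c * r" by linarith
    moreover have "c * r > norm y" using r c by (simp add: field_simps)
    ultimately show False by simp
  qed
  have cP: "continuous_on ({0..1} \<times> UNIV) (\<lambda>p. ceval L (\<lambda>k. A (fst p) k + snd p * U k))"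
    by (rule continuous_on_ceval_line) (rule contA)
  have "g \<zeta> \<noteq> 0"
  proof (rule Hurwitz_no_zeros[of "{z. 0 < Im z}" "\<lambda>n \<zeta>. ceval L (\<lambda>k. A (\<theta>n n) k + \<zeta> * U k)" g])
    show "open {z. 0 < Im z}" by (rule open_halfspace_Im_gt)
    show "connected {z. 0 < Im z}" by blast
    show "\<And>n. (\<lambda>\<zeta>. ceval L (\<lambda>k. A (\<theta>n n) k + \<zeta> * U k)) holomorphic_on {z. 0 < Im z}"
      by (rule holomorphic_on_ceval_line)
    show "g holomorphic_on {z. 0 < Im z}" unfolding g_def by (rule holomorphic_on_ceval_line)
    show "\<not> g constant_on {z. 0 < Im z}" by (rule nc)
    show "\<And>n z. z \<in> {z. 0 < Im z} \<Longrightarrow> ceval L (\<lambda>k. A (\<theta>n n) k + z * U k) \<noteq> 0" using nz by auto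
    show "\<zeta> \<in> {z. 0 < Im z}" using z by simp
    fix K :: "complex set" assume "compact K" "K \<subseteq> {z. 0 < Im z}"
    show "uniform_limit K (\<lambda>n \<zeta>. ceval L (\<lambda>k. A (\<theta>n n) k + \<zeta> * U k)) g sequentially"
      using uniform_limit_param[OF cP th lim th0 \<open>compact K\<close>]
      unfolding g_def by simp
  qed
  then show ?thesis by (simp add: g_def)
qed

lemma closed_ceval_line_zero_parameters:
  fixes A :: "real \<Rightarrow> 'a::euclidean_space \<Rightarrow> complex"
  assumes V: "homogeneous_mpoly L d" and U: "ceval L U \<noteq> 0"
    and contA: "\<And>k. k \<in> Basis \<Longrightarrow> continuous_on {0..1} (\<lambda>\<theta>. A \<theta> k)"
  shows "closed {\<theta> \<in> {0..1}. \<exists>\<zeta>. Im \<zeta> \<ge> 0 \<and> ceval L (\<lambda>k. A \<theta> k + \<zeta> * U k) = 0}"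
    (is "closed ?S")
proof -
  obtain R c where R: "R > 0" and c: "c > 0" and gr: "\<forall>\<theta>\<in>{0..1}. \<forall>\<zeta>. norm \<zeta> \<ge> R \<longrightarrow>
            norm (ceval L (\<lambda>k. A \<theta> k + \<zeta> * U k)) \<ge> c * norm \<zeta> ^ d"
    using ceval_line_growth[OF V U, of A] contA by blast
  define P where "P = (\<lambda>p. ceval L (\<lambda>k. A (fst p) k + snd p * U k))"
  have cP: "continuous_on ({0..1} \<times> UNIV) P"
    unfolding P_def by (rule continuous_on_ceval_line) (rule contA)
  define T where "T = ({0..1} \<times> cball 0 R) \<inter> {p::real\<times>complex. 0 \<le> Im (snd p)}"
  define Z where "Z = {p \<in> T. P p = 0}"
  have "closed {p::real\<times>complex. 0 \<le> Im (snd p)}"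
    by (intro closed_Collect_le continuous_intros)
  then have cT: "closed T" unfolding T_def
    by (intro closed_Int closed_Times closed_atLeastAtMost closed_cball)
  have "continuous_on T P" by (rule continuous_on_subset[OF cP]) (auto simp: T_def)
  then have "closed Z" unfolding Z_def using cT by (rule continuous_closed_preimage_constant)
  moreover have "bounded Z" unfolding Z_def T_def
    by (rule bounded_subset[of "{0..1} \<times> cball 0 R"]) (auto intro: bounded_Times)
  ultimately have "compact Z" by (simp add: compact_eq_bounded_closed)
  then have "compact (fst ` Z)" by (intro compact_continuous_image continuous_intros)
  moreover have "?S = fst ` Z"
  proof
    show "fst ` Z \<subseteq> ?S" by (auto simp: Z_def P_def T_def)
    show "?S \<subseteq> fst ` Z"
    proof
      fix \<theta> assume "\<theta> \<in> ?S"
      then obtain \<zeta> where th: "\<theta> \<in> {0..1}" and z: "Im \<zeta> \<ge> 0" "P (\<theta>, \<zeta>) = 0" by (auto simp: P_def)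
      have "norm \<zeta> \<le> R"
      proof (rule ccontr)
        assume "\<not> norm \<zeta> \<le> R"
        then have "norm (P (\<theta>, \<zeta>)) \<ge> c * norm \<zeta> ^ d" using gr th by (auto simp: P_def)
        moreover have "norm \<zeta> > 0" using R \<open>\<not> norm \<zeta> \<le> R\<close> by linarith
        then have "c * norm \<zeta> ^ d > 0" using c by simp
        ultimately show False using z by simp
      qed
      then have "(\<theta>, \<zeta>) \<in> Z" using th z by (auto simp: Z_def T_def)
      then show "\<theta> \<in> fst ` Z" by force
    qed
  qed
  ultimately show ?thesis by (simp add: compact_imp_closed)
qed

(* Zeros move continuously in \<theta> and cannot come from infinity, so a zero in the closed
   upper half-plane could only appear by crossing the real axis, which bdry forbids. *)
lemma ceval_line_no_zeros_homotopy:
  fixes A :: "real \<Rightarrow> 'a::euclidean_space \<Rightarrow> complex"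
  assumes V: "homogeneous_mpoly L d" and d: "d \<ge> 1" and U: "ceval L U \<noteq> 0"
    and contA: "\<And>k. k \<in> Basis \<Longrightarrow> continuous_on {0..1} (\<lambda>\<theta>. A \<theta> k)"
    and bdry: "\<And>\<theta> \<zeta>. \<theta> \<in> {0..1} \<Longrightarrow> Im \<zeta> = 0 \<Longrightarrow> ceval L (\<lambda>k. A \<theta> k + \<zeta> * U k) \<noteq> 0"
    and init: "\<And>\<zeta>. Im \<zeta> \<ge> 0 \<Longrightarrow> ceval L (\<lambda>k. A 0 k + \<zeta> * U k) \<noteq> 0"
    and th: "\<theta> \<in> {0..1}" and z: "Im \<zeta> \<ge> 0"
  shows "ceval L (\<lambda>k. A \<theta> k + \<zeta> * U k) \<noteq> 0"
proof -
  define P where "P = (\<lambda>p. ceval L (\<lambda>k. A (fst p) k + snd p * U k))"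
  define S where "S = {\<theta> \<in> {0..1}. \<exists>\<zeta>. Im \<zeta> \<ge> 0 \<and> P (\<theta>, \<zeta>) = 0}"
  have cS: "closed S"
    using closed_ceval_line_zero_parameters[OF V U contA] by (simp add: S_def P_def)
  have "S = {}"
  proof (rule ccontr)
    assume ne: "S \<noteq> {}"
    have bb: "bdd_below S" by (rule bdd_belowI[of _ 0]) (auto simp: S_def)
    define \<sigma> where "\<sigma> = Inf S"
    have sS: "\<sigma> \<in> S" unfolding \<sigma>_def using closed_contains_Inf[OF ne bb cS] .
    have "0 \<notin> S" using init by (auto simp: S_def P_def)
    then have s0: "\<sigma> > 0" "\<sigma> \<le> 1" using sS by (auto simp: S_def) (metis antisym_conv2)
    define \<theta>n where "\<theta>n = (\<lambda>n. \<sigma> * (1 - inverse (real (Suc (Suc n)))))"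
    have inv: "inverse (real (Suc (Suc n))) > 0" "inverse (real (Suc (Suc n))) \<le> 1" for n
      by (auto simp: field_simps)
    have thn: "\<theta>n n \<in> {0..1}" "\<theta>n n < \<sigma>" for n
      using s0 inv[of n] by (auto simp: \<theta>n_def mult_le_one)
    have "(\<lambda>n. inverse (real (Suc (Suc n)))) \<longlonglongrightarrow> 0"
      by (rule LIMSEQ_Suc[OF LIMSEQ_inverse_real_of_nat])
    then have "(\<lambda>n. \<sigma> * (1 - inverse (real (Suc (Suc n))))) \<longlonglongrightarrow> \<sigma> * (1 - 0)"
      by (intro tendsto_mult tendsto_diff tendsto_const)
    then have lim: "\<theta>n \<longlonglongrightarrow> \<sigma>" unfolding \<theta>n_def by simp
    have nS: "\<theta>n n \<notin> S" for n
    proof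
      assume "\<theta>n n \<in> S"
      then have "\<sigma> \<le> \<theta>n n" unfolding \<sigma>_def by (rule cInf_lower[OF _ bb])
      then show False using thn(2)[of n] by simp
    qed
    have "ceval L (\<lambda>k. A \<sigma> k + \<zeta> * U k) \<noteq> 0" if "Im \<zeta> \<ge> 0" for \<zeta>
    proof (cases "Im \<zeta> = 0")
      case True then show ?thesis using bdry s0 by auto
    next
      case False
      then have "Im \<zeta> > 0" using that by simp
      show ?thesis
      proof (rule ceval_line_no_zeros_limit[OF V d U contA thn(1) lim])
        show "\<sigma> \<in> {0..1}" using s0 by auto
        show "Im \<zeta> > 0" by fact
        fix n and \<zeta>' :: complex assume "Im \<zeta>' > 0"
        then show "ceval L (\<lambda>k. A (\<theta>n n) k + \<zeta>' * U k) \<noteq> 0"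
          using nS[of n] thn(1)[of n] by (auto simp: S_def P_def)
      qed
    qed
    then show False using sS by (auto simp: S_def P_def)
  qed
  then show ?thesis using th z by (auto simp: S_def P_def)
qed

section \<open>Hyperbolicity cones\<close>

definition hyperbolic_mpoly :: "'a::euclidean_space mpoly \<Rightarrow> 'a \<Rightarrow> bool" where
  "hyperbolic_mpoly L E \<longleftrightarrow> reval L E \<noteq> 0 \<and>
      (\<forall>x \<zeta>. ceval L (\<lambda>k. \<zeta> * ccoords E k - ccoords x k) = 0 \<longrightarrow> Im \<zeta> = 0)"

definition in_open_cone :: "'a::euclidean_space mpoly \<Rightarrow> 'a \<Rightarrow> 'a \<Rightarrow> bool" where
  "in_open_cone L E u \<longleftrightarrow>
      (\<forall>\<zeta>. ceval L (\<lambda>k. \<zeta> * ccoords E k - ccoords u k) = 0 \<longrightarrow> Im \<zeta> = 0 \<and> Re \<zeta> > 0)"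

definition in_closed_cone :: "'a::euclidean_space mpoly \<Rightarrow> 'a \<Rightarrow> 'a \<Rightarrow> bool" where
  "in_closed_cone L E u \<longleftrightarrow>
      (\<forall>\<zeta>. ceval L (\<lambda>k. \<zeta> * ccoords E k - ccoords u k) = 0 \<longrightarrow> Im \<zeta> = 0 \<and> Re \<zeta> \<ge> 0)"

lemma ceval_root_iff_eigenvalue:
  assumes H: "hyperbolic_mpoly L E"
  shows "ceval L (\<lambda>k. \<zeta> * ccoords E k - ccoords u k) = 0 \<longleftrightarrow>
    Im \<zeta> = 0 \<and> Re \<zeta> \<in> eigenvalues (reval L) E u"
proof
  assume r: "ceval L (\<lambda>k. \<zeta> * ccoords E k - ccoords u k) = 0"
  then have im: "Im \<zeta> = 0" using H by (simp add: hyperbolic_mpoly_def)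
  then have "ceval L (\<lambda>k. of_real (Re \<zeta>) * ccoords E k - ccoords u k) = 0"
    using r complex_eq_of_real_Re[OF im] by simp
  then show "Im \<zeta> = 0 \<and> Re \<zeta> \<in> eigenvalues (reval L) E u"
    using im by (simp add: ceval_real_line eigenvalues_def)
next
  assume "Im \<zeta> = 0 \<and> Re \<zeta> \<in> eigenvalues (reval L) E u"
  then show "ceval L (\<lambda>k. \<zeta> * ccoords E k - ccoords u k) = 0"
    using complex_eq_of_real_Re ceval_real_line[of L "Re \<zeta>" E u] by (auto simp: eigenvalues_def)
qed

lemma in_open_cone_iff:
  assumes "hyperbolic_mpoly L E"
  shows "in_open_cone L E u \<longleftrightarrow> u \<in> hcone_open (reval L) E"
proof -
  have "in_open_cone L E u \<longleftrightarrow>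
      (\<forall>\<zeta>. Im \<zeta> = 0 \<and> Re \<zeta> \<in> eigenvalues (reval L) E u \<longrightarrow> Re \<zeta> > 0)"
    by (auto simp: in_open_cone_def ceval_root_iff_eigenvalue[OF assms])
  also have "\<dots> \<longleftrightarrow> (\<forall>s\<in>eigenvalues (reval L) E u. s > 0)"
    by (metis Im_complex_of_real Re_complex_of_real)
  finally show ?thesis by (simp add: hcone_open_def)
qed

lemma in_closed_cone_iff:
  assumes "hyperbolic_mpoly L E"
  shows "in_closed_cone L E u \<longleftrightarrow> u \<in> hcone_closed (reval L) E"
proof -
  have "in_closed_cone L E u \<longleftrightarrow>
      (\<forall>\<zeta>. Im \<zeta> = 0 \<and> Re \<zeta> \<in> eigenvalues (reval L) E u \<longrightarrow> Re \<zeta> \<ge> 0)"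
    by (auto simp: in_closed_cone_def ceval_root_iff_eigenvalue[OF assms])
  also have "\<dots> \<longleftrightarrow> (\<forall>s\<in>eigenvalues (reval L) E u. s \<ge> 0)"
    by (metis Im_complex_of_real Re_complex_of_real)
  finally show ?thesis by (simp add: hcone_closed_def)
qed

lemma in_open_cone_reval_nonzero:
  assumes V: "homogeneous_mpoly L d" and p: "in_open_cone L E u"
  shows "reval L u \<noteq> 0"
proof
  assume "reval L u = 0"
  have "ceval L (\<lambda>k. 0 * ccoords E k - ccoords u k) = ceval L (\<lambda>k. (-1) * ccoords u k)" by simp
  also have "\<dots> = 0" using ceval_scaled_ccoords[OF V, of "-1" u] \<open>reval L u = 0\<close> by simp
  finally show False using p[unfolded in_open_cone_def, THEN spec, of 0] by simp
qed

lemma ceval_open_cone_pencil_nonzero: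
  assumes V: "homogeneous_mpoly L d" and H: "hyperbolic_mpoly L E" and u: "in_open_cone L E u"
    and a: "a \<noteq> 0" and ab: "Re (a * cnj b) \<ge> 0"
  shows "ceval L (\<lambda>k. a * ccoords E k + b * ccoords u k) \<noteq> 0"
proof (cases "b = 0")
  case True
  then show ?thesis using H a ceval_scaled_ccoords[OF V, of a E] by (simp add: hyperbolic_mpoly_def)
next
  case False
  have "ceval L (\<lambda>k. a * ccoords E k + b * ccoords u k)
      = ceval L (\<lambda>k. (- b) * ((- a / b) * ccoords E k - ccoords u k))"
    by (rule ceval_cong) (simp add: False right_diff_distrib)
  also have "\<dots> = (- b) ^ d * ceval L (\<lambda>k. (- a / b) * ccoords E k - ccoords u k)"
    by (rule ceval_homogeneous[OF V])
  finally have eq: "ceval L (\<lambda>k. a * ccoords E k + b * ccoords u k)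
      = (- b) ^ d * ceval L (\<lambda>k. (- a / b) * ccoords E k - ccoords u k)" .
  have "Re (- a / b) \<le> 0" using ab False by (simp add: Re_divide divide_nonpos_nonneg)
  then have "ceval L (\<lambda>k. (- a / b) * ccoords E k - ccoords u k) \<noteq> 0"
    using u[unfolded in_open_cone_def, THEN spec, of "- a / b"] by auto
  then show ?thesis using eq False by simp
qed

(* Deform y to 0: no zero crosses the real axis because E is a direction of hyperbolicity,
   and at the start the zeros are excluded by the definition of the open cone. *)
lemma ceval_no_zeros_upper_shift:
  assumes V: "homogeneous_mpoly L d" and H: "hyperbolic_mpoly L E" and p: "in_open_cone L E u"
    and s: "s > 0" and t: "Im t \<ge> 0"
  shows "ceval L (\<lambda>k. ccoords y k + t * ccoords u k + \<i> * of_real s * ccoords E k) \<noteq> 0"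
proof (cases "d = 0")
  case True
  then show ?thesis using H V ceval_degree_0[of L _ "ccoords E"]
    by (simp add: hyperbolic_mpoly_def ceval_ccoords)
next
  case False
  then have d: "d \<ge> 1" by simp
  define A where "A = (\<lambda>\<theta>::real. \<lambda>k. of_real \<theta> * of_real ((y \<bullet> k) / s) + \<i> * ccoords E k)"
  have U: "ceval L (ccoords u) \<noteq> 0" using in_open_cone_reval_nonzero[OF V p]
    by (simp add: ceval_ccoords)
  have contA: "continuous_on {0..1} (\<lambda>\<theta>. A \<theta> k)" for k
    unfolding A_def by (intro continuous_intros)
  have key: "ceval L (\<lambda>k. A 1 k + (t / of_real s) * ccoords u k) \<noteq> 0"
  proof (rule ceval_line_no_zeros_homotopy[OF V d U contA])
    show "(1::real) \<in> {0..1}" by simp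
    show "Im (t / of_real s) \<ge> 0" using t s by simp
  next
    fix \<theta> :: real and \<zeta> :: complex assume "\<theta> \<in> {0..1}" "Im \<zeta> = 0"
    define x where "x = - ((\<theta> / s) *\<^sub>R y + Re \<zeta> *\<^sub>R u)"
    have "ceval L (\<lambda>k. A \<theta> k + \<zeta> * ccoords u k) = ceval L (\<lambda>k. \<i> * ccoords E k - ccoords x k)"
      by (rule ceval_cong) (subst complex_eq_of_real_Re[OF \<open>Im \<zeta> = 0\<close>],
          simp add: A_def x_def ccoords_def inner_add_left algebra_simps)
    then show "ceval L (\<lambda>k. A \<theta> k + \<zeta> * ccoords u k) \<noteq> 0" using H unfolding hyperbolic_mpoly_def
      by force
  next
    fix \<zeta> :: complex assume "Im \<zeta> \<ge> 0"
    then have "ceval L (\<lambda>k. \<i> * ccoords E k + \<zeta> * ccoords u k) \<noteq> 0"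
      by (intro ceval_open_cone_pencil_nonzero[OF V H p]) simp_all
    moreover have "ceval L (\<lambda>k. A 0 k + \<zeta> * ccoords u k)
        = ceval L (\<lambda>k. \<i> * ccoords E k + \<zeta> * ccoords u k)"
      by (rule ceval_cong) (simp add: A_def)
    ultimately show "ceval L (\<lambda>k. A 0 k + \<zeta> * ccoords u k) \<noteq> 0" by simp
  qed
  have "ceval L (\<lambda>k. ccoords y k + t * ccoords u k + \<i> * of_real s * ccoords E k)
      = ceval L (\<lambda>k. of_real s * (A 1 k + (t / of_real s) * ccoords u k))"
    by (rule ceval_cong) (use s in \<open>simp add: A_def ccoords_def algebra_simps\<close>)
  also have "\<dots> = of_real s ^ d * ceval L (\<lambda>k. A 1 k + (t / of_real s) * ccoords u k)"
    by (rule ceval_homogeneous[OF V])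
  finally show ?thesis using key s by simp
qed

lemma ceval_no_zeros_open_cone_upper:
  assumes V: "homogeneous_mpoly L d" and H: "hyperbolic_mpoly L E" and p: "in_open_cone L E u"
    and t: "Im t > 0"
  shows "ceval L (\<lambda>k. ccoords y k + t * ccoords u k) \<noteq> 0"
proof (cases "d = 0")
  case True
  then show ?thesis using H V ceval_degree_0[of L _ "ccoords E"]
    by (simp add: hyperbolic_mpoly_def ceval_ccoords)
next
  case False
  then have d: "d \<ge> 1" by simp
  define A where "A = (\<lambda>s::real. \<lambda>k. ccoords y k + \<i> * of_real s * ccoords E k)"
  have U: "ceval L (ccoords u) \<noteq> 0" using in_open_cone_reval_nonzero[OF V p]
    by (simp add: ceval_ccoords)
  have contA: "continuous_on {0..1} (\<lambda>\<theta>. A \<theta> k)" for k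
    unfolding A_def by (intro continuous_intros)
  define \<theta>n where "\<theta>n = (\<lambda>n. inverse (real (Suc (Suc n))))"
  have thn: "\<theta>n n \<in> {0..1}" "\<theta>n n > 0" for n by (auto simp: \<theta>n_def field_simps)
  have lim: "\<theta>n \<longlonglongrightarrow> 0" unfolding \<theta>n_def by (rule LIMSEQ_Suc[OF LIMSEQ_inverse_real_of_nat])
  have "ceval L (\<lambda>k. A 0 k + t * ccoords u k) \<noteq> 0"
  proof (rule ceval_line_no_zeros_limit[OF V d U contA thn(1) lim])
    show "(0::real) \<in> {0..1}" by simp
    show "Im t > 0" by fact
    fix n and \<zeta> :: complex assume z: "Im \<zeta> > 0"
    have "ceval L (\<lambda>k. A (\<theta>n n) k + \<zeta> * ccoords u k)
        = ceval L (\<lambda>k. ccoords y k + \<zeta> * ccoords u k + \<i> * of_real (\<theta>n n) * ccoords E k)"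
      by (rule ceval_cong) (simp add: A_def algebra_simps)
    also have "\<dots> \<noteq> 0" using ceval_no_zeros_upper_shift[OF V H p thn(2)[of n]] z by simp
    finally show "ceval L (\<lambda>k. A (\<theta>n n) k + \<zeta> * ccoords u k) \<noteq> 0" .
  qed
  then show ?thesis by (simp add: A_def)
qed

lemma ceval_no_zeros_open_cone_nonreal:
  assumes V: "homogeneous_mpoly L d" and H: "hyperbolic_mpoly L E" and p: "in_open_cone L E u"
    and t: "Im t \<noteq> 0"
  shows "ceval L (\<lambda>k. ccoords y k + t * ccoords u k) \<noteq> 0"
proof (cases "Im t > 0")
  case True then show ?thesis using ceval_no_zeros_open_cone_upper[OF V H p] by blast
next
  case False
  then have "Im (cnj t) > 0" using t by simp
  then have "ceval L (\<lambda>k. ccoords y k + cnj t * ccoords u k) \<noteq> 0"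
    using ceval_no_zeros_open_cone_upper[OF V H p] by blast
  moreover have "ceval L (\<lambda>k. ccoords y k + t * ccoords u k)
      = cnj (ceval L (\<lambda>k. ccoords y k + cnj t * ccoords u k))"
    using ceval_cnj[of L "\<lambda>k. ccoords y k + cnj t * ccoords u k"] by simp
  ultimately show ?thesis by simp
qed

lemma in_open_cone_segment:
  assumes V: "homogeneous_mpoly L d" and H: "hyperbolic_mpoly L E" and p: "in_open_cone L E z"
    and th: "\<theta> \<in> {0..1}"
  shows "in_open_cone L E ((1 - \<theta>) *\<^sub>R E + \<theta> *\<^sub>R z)"
  unfolding in_open_cone_def
proof (intro allI impI)
  fix \<zeta> assume r: "ceval L (\<lambda>k. \<zeta> * ccoords E k - ccoords ((1 - \<theta>) *\<^sub>R E + \<theta> *\<^sub>R z) k) = 0"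
  show "Im \<zeta> = 0 \<and> Re \<zeta> > 0"
  proof (cases "\<theta> = 0")
    case True
    have "ceval L (\<lambda>k. \<zeta> * ccoords E k - ccoords ((1 - \<theta>) *\<^sub>R E + \<theta> *\<^sub>R z) k)
        = ceval L (\<lambda>k. (\<zeta> - 1) * ccoords E k)"
      by (rule ceval_cong) (simp add: True algebra_simps)
    also have "\<dots> = (\<zeta> - 1) ^ d * of_real (reval L E)" by (rule ceval_scaled_ccoords[OF V])
    finally have "(\<zeta> - 1) ^ d = 0" using r H by (simp add: hyperbolic_mpoly_def)
    then have "\<zeta> = 1" by simp
    then show ?thesis by simp
  next
    case False
    then have t0: "\<theta> > 0" using th by auto
    have "ceval L (\<lambda>k. \<zeta> * ccoords E k - ccoords ((1 - \<theta>) *\<^sub>R E + \<theta> *\<^sub>R z) k) =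
          ceval L (\<lambda>k. of_real \<theta> * (((\<zeta> - 1 + of_real \<theta>) / of_real \<theta>) * ccoords E k - ccoords z k))"
      by (rule ceval_cong) (use t0 in \<open>simp add: ccoords_def inner_add_left inner_diff_left field_simps\<close>)
    also have "\<dots> = of_real \<theta> ^ d *
        ceval L (\<lambda>k. ((\<zeta> - 1 + of_real \<theta>) / of_real \<theta>) * ccoords E k - ccoords z k)"
      by (rule ceval_homogeneous[OF V])
    finally have "ceval L (\<lambda>k. ((\<zeta> - 1 + of_real \<theta>) / of_real \<theta>) * ccoords E k - ccoords z k) = 0"
      using r t0 by simp
    then have "Im ((\<zeta> - 1 + of_real \<theta>) / of_real \<theta>) = 0 \<and> Re ((\<zeta> - 1 + of_real \<theta>) / of_real \<theta>) > 0"
      using p unfolding in_open_cone_def by blast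
    then have "Im \<zeta> = 0" "Re \<zeta> - 1 + \<theta> > 0" using t0 by (simp_all add: zero_less_divide_iff)
    then show ?thesis using th by auto
  qed
qed

lemma ceval_no_zeros_open_cone_right:
  assumes V: "homogeneous_mpoly L d" and H: "hyperbolic_mpoly L E" and pu: "in_open_cone L E u"
    and pz: "in_open_cone L E z" and b: "Re b \<ge> 0"
  shows "ceval L (\<lambda>k. ccoords z k + b * ccoords u k) \<noteq> 0"
proof (cases "d = 0")
  case True
  then show ?thesis using H V ceval_degree_0[of L _ "ccoords E"]
    by (simp add: hyperbolic_mpoly_def ceval_ccoords)
next
  case False
  then have d: "d \<ge> 1" by simp
  define A where "A = (\<lambda>\<theta>::real. ccoords ((1 - \<theta>) *\<^sub>R E + \<theta> *\<^sub>R z))"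
  define U where "U = (\<lambda>k. - \<i> * ccoords u k)"
  have U: "ceval L U \<noteq> 0" using in_open_cone_reval_nonzero[OF V pu] ceval_scaled_ccoords[OF V, of "- \<i>" u] by (simp add: U_def)
  have contA: "continuous_on {0..1} (\<lambda>\<theta>. A \<theta> k)" for k
    unfolding A_def ccoords_def by (simp add: inner_add_left) (intro continuous_intros)
  have "ceval L (\<lambda>k. A 1 k + (\<i> * b) * U k) \<noteq> 0"
  proof (rule ceval_line_no_zeros_homotopy[OF V d U contA])
    show "(1::real) \<in> {0..1}" by simp
    show "Im (\<i> * b) \<ge> 0" using b by simp
  next
    fix \<theta> :: real and \<zeta> :: complex assume th: "\<theta> \<in> {0..1}" and z: "Im \<zeta> = 0"
    define zt where "zt = (1 - \<theta>) *\<^sub>R E + \<theta> *\<^sub>R z"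
    have pzt: "in_open_cone L E zt" unfolding zt_def by (rule in_open_cone_segment[OF V H pz th])
    show "ceval L (\<lambda>k. A \<theta> k + \<zeta> * U k) \<noteq> 0"
    proof (cases "Re \<zeta> = 0")
      case True
      then have "\<zeta> = 0" using z by (simp add: complex_eq_iff)
      then show ?thesis using in_open_cone_reval_nonzero[OF V pzt]
        by (simp add: A_def zt_def[symmetric] ceval_ccoords)
    next
      case False
      define r where "r = Re \<zeta>"
      have r0: "r \<noteq> 0" using False by (simp add: r_def)
      have Ath: "A \<theta> = ccoords zt" by (simp add: A_def zt_def)
      have one: "(- \<i> * of_real r) * (\<i> / of_real r) = 1" using r0 by (simp add: field_simps)
      have dist: "(c::complex) * (x + e * y) = c * x + (c * e) * y" for c x e y
        by (simp add: algebra_simps)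
      have "ceval L (\<lambda>k. A \<theta> k + \<zeta> * U k) =
            ceval L (\<lambda>k. (- \<i> * of_real r) * (ccoords u k + (\<i> / of_real r) * ccoords zt k))"
        unfolding dist one by (rule ceval_cong) (simp add: Ath U_def r_def complex_eq_of_real_Re[OF z, symmetric])
      also have "\<dots> = (- \<i> * of_real r) ^ d *
          ceval L (\<lambda>k. ccoords u k + (\<i> / of_real r) * ccoords zt k)"
        by (rule ceval_homogeneous[OF V])
      finally show ?thesis
        using ceval_no_zeros_open_cone_nonreal[OF V H pzt, of "\<i> / of_real r" u] False
          by (simp add: r_def)
    qed
  next
    fix \<zeta> :: complex assume "Im \<zeta> \<ge> 0"
    then have "ceval L (\<lambda>k. 1 * ccoords E k + (- \<i> * \<zeta>) * ccoords u k) \<noteq> 0"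
      by (intro ceval_open_cone_pencil_nonzero[OF V H pu]) simp_all
    moreover have "ceval L (\<lambda>k. A 0 k + \<zeta> * U k)
        = ceval L (\<lambda>k. 1 * ccoords E k + (- \<i> * \<zeta>) * ccoords u k)"
      by (rule ceval_cong) (simp add: A_def U_def)
    ultimately show "ceval L (\<lambda>k. A 0 k + \<zeta> * U k) \<noteq> 0" by simp
  qed
  moreover have "ceval L (\<lambda>k. A 1 k + (\<i> * b) * U k) = ceval L (\<lambda>k. ccoords z k + b * ccoords u k)"
    by (rule ceval_cong) (simp add: A_def U_def algebra_simps)
  ultimately show ?thesis by simp
qed

lemma in_open_cone_shift:
  assumes z: "in_open_cone L E z" and \<delta>: "\<delta> \<ge> 0"
  shows "in_open_cone L E (z + \<delta> *\<^sub>R E)"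
  unfolding in_open_cone_def
proof (intro allI impI)
  fix \<zeta> assume r: "ceval L (\<lambda>k. \<zeta> * ccoords E k - ccoords (z + \<delta> *\<^sub>R E) k) = 0"
  have "ceval L (\<lambda>k. \<zeta> * ccoords E k - ccoords (z + \<delta> *\<^sub>R E) k)
      = ceval L (\<lambda>k. (\<zeta> - of_real \<delta>) * ccoords E k - ccoords z k)"
    by (rule ceval_cong) (simp add: ccoords_def inner_add_left algebra_simps)
  then have "Im (\<zeta> - of_real \<delta>) = 0 \<and> Re (\<zeta> - of_real \<delta>) > 0"
    using r z[unfolded in_open_cone_def, THEN spec, of "\<zeta> - of_real \<delta>"] by simp
  then show "Im \<zeta> = 0 \<and> Re \<zeta> > 0" using \<delta> by simp
qed

lemma in_closed_cone_shift:
  assumes nn: "in_closed_cone L E w" and \<delta>: "\<delta> > 0"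
  shows "in_open_cone L E (w + \<delta> *\<^sub>R E)"
  unfolding in_open_cone_def
proof (intro allI impI)
  fix \<zeta> assume r: "ceval L (\<lambda>k. \<zeta> * ccoords E k - ccoords (w + \<delta> *\<^sub>R E) k) = 0"
  have "ceval L (\<lambda>k. \<zeta> * ccoords E k - ccoords (w + \<delta> *\<^sub>R E) k)
      = ceval L (\<lambda>k. (\<zeta> - of_real \<delta>) * ccoords E k - ccoords w k)"
    by (rule ceval_cong) (simp add: ccoords_def inner_add_left algebra_simps)
  then have "Im (\<zeta> - of_real \<delta>) = 0 \<and> Re (\<zeta> - of_real \<delta>) \<ge> 0"
    using r nn[unfolded in_closed_cone_def, THEN spec, of "\<zeta> - of_real \<delta>"] by simp
  then show "Im \<zeta> = 0 \<and> Re \<zeta> > 0" using \<delta> by simp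
qed

lemma ceval_no_zeros_closed_cone_upper:
  assumes V: "homogeneous_mpoly L d" and H: "hyperbolic_mpoly L E" and nn: "in_closed_cone L E w"
    and a: "Im a > 0" and b: "Im b \<ge> 0"
  shows "ceval L (\<lambda>k. ccoords y k + a * ccoords E k + b * ccoords w k) \<noteq> 0"
proof (cases "Im b = 0")
  case True
  define x where "x = - (y + Re b *\<^sub>R w)"
  have "ceval L (\<lambda>k. ccoords y k + a * ccoords E k + b * ccoords w k)
      = ceval L (\<lambda>k. a * ccoords E k - ccoords x k)"
    by (rule ceval_cong) (subst complex_eq_of_real_Re[OF True], simp add: x_def ccoords_def inner_add_left algebra_simps)
  then show ?thesis using H a unfolding hyperbolic_mpoly_def by force
next
  case False
  define \<alpha> where "\<alpha> = Im a"
  define \<beta> where "\<beta> = Im b"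
  have ab: "\<alpha> > 0" "\<beta> > 0" using a b False by (auto simp: \<alpha>_def \<beta>_def)
  define \<delta> where "\<delta> = \<alpha> / (2 * \<beta>)"
  have \<delta>: "\<delta> > 0" "\<beta> * \<delta> = \<alpha> / 2" using ab by (auto simp: \<delta>_def)
  define u where "u = w + \<delta> *\<^sub>R E"
  have pu: "in_open_cone L E u" unfolding u_def by (rule in_closed_cone_shift[OF nn \<delta>(1)])
  define y' where "y' = y + Re a *\<^sub>R E + Re b *\<^sub>R w"
  have "ceval L (\<lambda>k. ccoords y k + a * ccoords E k + b * ccoords w k) =
        ceval L (\<lambda>k. ccoords y' k + (\<i> * of_real \<beta>) * ccoords u k
            + \<i> * of_real (\<alpha> / 2) * ccoords E k)"
  proof (rule ceval_cong)
    fix k :: 'a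
    have h: "\<beta> * \<delta> * (E \<bullet> k) = \<alpha> / 2 * (E \<bullet> k)" using \<delta>(2) by simp
    have "\<beta> * (w \<bullet> k + \<delta> * (E \<bullet> k)) + \<alpha> / 2 * (E \<bullet> k)
        = \<beta> * (w \<bullet> k) + (\<beta> * \<delta> * (E \<bullet> k) + \<alpha> / 2 * (E \<bullet> k))"
      by (simp add: algebra_simps)
    also have "\<dots> = \<beta> * (w \<bullet> k) + \<alpha> * (E \<bullet> k)" unfolding h by (simp add: field_simps)
    finally have "Im a * (E \<bullet> k) + Im b * (w \<bullet> k) = \<beta> * (w \<bullet> k + \<delta> * (E \<bullet> k)) + \<alpha> / 2 * (E \<bullet> k)"
      by (simp add: \<alpha>_def \<beta>_def)
    then show "ccoords y k + a * ccoords E k + b * ccoords w k =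
        ccoords y' k + (\<i> * of_real \<beta>) * ccoords u k + \<i> * of_real (\<alpha> / 2) * ccoords E k"
      by (simp add: complex_eq_iff y'_def u_def ccoords_def inner_add_left)
  qed
  also have "\<dots> \<noteq> 0" using ceval_no_zeros_upper_shift[OF V H pu, of "\<alpha> / 2" "\<i> * of_real \<beta>" y'] ab
    by simp
  finally show ?thesis .
qed

lemma ceval_plus_deriv_upper_nonzero:
  assumes V: "homogeneous_mpoly L d" and H: "hyperbolic_mpoly L E" and nn: "in_closed_cone L E w"
    and z: "Im \<zeta> > 0"
  shows "ceval L (\<lambda>k. \<zeta> * ccoords E k - ccoords x k)
      + of_real c * ceval (mpoly_deriv L w) (\<lambda>k. \<zeta> * ccoords E k - ccoords x k) \<noteq> 0"
proof -
  define f where "f = line_cpoly L (\<lambda>k. \<zeta> * ccoords E k - ccoords x k) (ccoords w)"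
  have "\<forall>b. Im b \<ge> 0 \<longrightarrow> poly f b \<noteq> 0"
  proof (intro allI impI)
    fix b :: complex assume b: "Im b \<ge> 0"
    have "poly f b = ceval L (\<lambda>k. ccoords (- x) k + \<zeta> * ccoords E k + b * ccoords w k)"
      unfolding f_def poly_line_cpoly by (rule ceval_cong) (simp add: ccoords_def)
    then show "poly f b \<noteq> 0" using ceval_no_zeros_closed_cone_upper[OF V H nn z b] by simp
  qed
  from poly_plus_real_pderiv_nonzero[OF this, of c] show ?thesis
    by (simp add: f_def poly_line_cpoly poly_pderiv_line_cpoly)
qed

lemma ceval_plus_deriv_nonreal_nonzero:
  assumes V: "homogeneous_mpoly L d" and H: "hyperbolic_mpoly L E" and nn: "in_closed_cone L E w"
    and z: "Im \<zeta> \<noteq> 0"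
  shows "ceval L (\<lambda>k. \<zeta> * ccoords E k - ccoords x k)
      + of_real c * ceval (mpoly_deriv L w) (\<lambda>k. \<zeta> * ccoords E k - ccoords x k) \<noteq> 0"
proof (cases "Im \<zeta> > 0")
  case True then show ?thesis using ceval_plus_deriv_upper_nonzero[OF V H nn] by blast
next
  case False
  then have "Im (cnj \<zeta>) > 0" using z by simp
  from ceval_plus_deriv_upper_nonzero[OF V H nn this, of x c]
  have "cnj (ceval L (\<lambda>k. cnj \<zeta> * ccoords E k - ccoords x k)
      + of_real c * ceval (mpoly_deriv L w) (\<lambda>k. cnj \<zeta> * ccoords E k - ccoords x k)) \<noteq> 0"
    unfolding complex_cnj_zero_iff .
  moreover have "ceval M (\<lambda>k. \<zeta> * ccoords E k - ccoords x k)
      = cnj (ceval M (\<lambda>k. cnj \<zeta> * ccoords E k - ccoords x k))"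
    for M :: "'a mpoly"
    using ceval_cnj[of M "\<lambda>k. cnj \<zeta> * ccoords E k - ccoords x k"] by simp
  ultimately show ?thesis by simp
qed

lemma reval_deriv_ratio_open_cone_nonneg:
  assumes V: "homogeneous_mpoly L d" and H: "hyperbolic_mpoly L E"
    and u: "in_open_cone L E u" and z: "in_open_cone L E z"
  shows "reval (mpoly_deriv L u) z / reval L z \<ge> 0"
proof -
  define f where "f = line_cpoly L (ccoords z) (ccoords u)"
  have "\<forall>b. Re b \<ge> 0 \<longrightarrow> poly f b \<noteq> 0"
    using ceval_no_zeros_open_cone_right[OF V H u z] by (simp add: f_def poly_line_cpoly)
  then have "Re (poly (pderiv f) 0 / poly f 0) \<ge> 0" by (rule log_deriv_Re_nonneg)
  moreover have "poly f 0 = of_real (reval L z)"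
    by (simp add: f_def poly_line_cpoly ceval_ccoords[symmetric])
  moreover have "poly (pderiv f) 0 = of_real (reval (mpoly_deriv L u) z)"
    by (simp add: f_def poly_pderiv_line_cpoly ceval_ccoords[symmetric])
  ultimately show ?thesis by (simp add: of_real_divide[symmetric] del: of_real_divide)
qed

lemma nonneg_if_perturbations_nonneg:
  fixes r s :: real
  assumes "\<And>\<delta>. \<delta> > 0 \<Longrightarrow> r + \<delta> * s \<ge> 0"
  shows "r \<ge> 0"
proof -
  have "((\<lambda>\<delta>. r + \<delta> * s) \<longlongrightarrow> r + 0 * s) (at_right 0)"
    by (intro tendsto_intros)
  moreover have "\<forall>\<^sub>F \<delta> in at_right 0. r + \<delta> * s \<ge> 0"
    using assms eventually_at_right_less[of 0] by (auto elim: eventually_mono)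
  ultimately show ?thesis by (simp add: tendsto_lowerbound)
qed

lemma reval_plus_deriv_open_cone_nonzero:
  assumes V: "homogeneous_mpoly L d" and H: "hyperbolic_mpoly L E" and pz: "in_open_cone L E z"
    and nn: "in_closed_cone L E w" and \<mu>: "\<mu> \<ge> 0"
  shows "reval L z + \<mu> * reval (mpoly_deriv L w) z \<noteq> 0"
proof -
  have F0: "reval L z \<noteq> 0" by (rule in_open_cone_reval_nonzero[OF V pz])
  define r where "r = reval (mpoly_deriv L w) z / reval L z"
  define s where "s = reval (mpoly_deriv L E) z / reval L z"
  have "r + \<delta> * s \<ge> 0" if "\<delta> > 0" for \<delta>
    using reval_deriv_ratio_open_cone_nonneg[OF V H in_closed_cone_shift[OF nn that] pz]
    by (simp add: reval_mpoly_deriv_add_scaleR r_def s_def add_divide_distrib)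
  then have "r \<ge> 0" by (rule nonneg_if_perturbations_nonneg)
  then have "1 + \<mu> * r > 0" using \<mu> by (simp add: add_pos_nonneg)
  moreover have "reval L z + \<mu> * reval (mpoly_deriv L w) z = reval L z * (1 + \<mu> * r)"
    using F0 by (simp add: r_def field_simps)
  ultimately show ?thesis using F0 by simp
qed

lemma bracket_step_root_pos:
  assumes V: "homogeneous_mpoly L d" and H: "hyperbolic_mpoly L E" and pz: "in_open_cone L E z"
    and nn: "in_closed_cone L E w" and c: "c \<le> 0"
    and eq: "reval L (t *\<^sub>R E - z) + c * reval (mpoly_deriv L w) (t *\<^sub>R E - z) = 0"
  shows "t > 0"
proof (rule ccontr)
  assume "\<not> t > 0"
  then have t: "t \<le> 0" by simp
  define x' where "x' = z + (- t) *\<^sub>R E"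
  have px: "in_open_cone L E x'" unfolding x'_def by (rule in_open_cone_shift[OF pz]) (use t in simp)
  have neg: "t *\<^sub>R E - z = (-1) *\<^sub>R x'" by (simp add: x'_def)
  show False
  proof (cases "d = 0")
    case True
    then have "reval L (t *\<^sub>R E - z) = reval L E" using V reval_degree_0 by blast
    moreover have "reval (mpoly_deriv L w) (t *\<^sub>R E - z) = 0"
      using True V reval_mpoly_deriv_degree_0 by blast
    ultimately show False using eq H by (simp add: hyperbolic_mpoly_def)
  next
    case False
    then obtain m where m: "d = Suc m" by (cases d) auto
    have "reval L (t *\<^sub>R E - z) = (-1) ^ d * reval L x'" unfolding neg
      by (rule reval_homogeneous[OF V])
    moreover have "reval (mpoly_deriv L w) (t *\<^sub>R E - z)
        = (-1) ^ (d - 1) * reval (mpoly_deriv L w) x'"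
      unfolding neg by (rule reval_homogeneous[OF homogeneous_mpoly_deriv[OF V]])
    ultimately have "(-1) ^ m * (c * reval (mpoly_deriv L w) x' - reval L x') = 0"
      using eq by (simp add: m algebra_simps)
    then have "reval L x' + (- c) * reval (mpoly_deriv L w) x' = 0" by simp
    moreover have "- c \<ge> 0" using c by simp
    ultimately show False using reval_plus_deriv_open_cone_nonzero[OF V H px nn] by blast
  qed
qed

lemma hyperbolic_mpoly_bracket_step:
  assumes V: "homogeneous_mpoly L d" and H: "hyperbolic_mpoly L E" and w: "in_closed_cone L E w"
    and b: "b \<in> Basis" and Eb: "E \<bullet> b = 0"
  shows "hyperbolic_mpoly (bracket_step L w b) E"
  unfolding hyperbolic_mpoly_def
proof (intro conjI allI impI)
  show "reval (bracket_step L w b) E \<noteq> 0"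
    using H by (simp add: reval_bracket_step[OF b] Eb hyperbolic_mpoly_def)
  fix x \<zeta> assume r: "ceval (bracket_step L w b) (\<lambda>k. \<zeta> * ccoords E k - ccoords x k) = 0"
  show "Im \<zeta> = 0"
  proof (rule ccontr)
    assume "Im \<zeta> \<noteq> 0"
    then have "ceval L (\<lambda>k. \<zeta> * ccoords E k - ccoords x k)
        + of_real (x \<bullet> b) * ceval (mpoly_deriv L w) (\<lambda>k. \<zeta> * ccoords E k - ccoords x k) \<noteq> 0"
      by (rule ceval_plus_deriv_nonreal_nonzero[OF V H w])
    moreover have "ceval (bracket_step L w b) (\<lambda>k. \<zeta> * ccoords E k - ccoords x k)
        = ceval L (\<lambda>k. \<zeta> * ccoords E k - ccoords x k)
          + of_real (x \<bullet> b) * ceval (mpoly_deriv L w) (\<lambda>k. \<zeta> * ccoords E k - ccoords x k)"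
      by (simp add: ceval_bracket_step[OF b] ccoords_def Eb)
    ultimately show False using r by simp
  qed
qed

lemma in_open_cone_bracket_step:
  assumes V: "homogeneous_mpoly L d" and H: "hyperbolic_mpoly L E" and z: "in_open_cone L E z"
    and w: "in_closed_cone L E w" and b: "b \<in> Basis" and Eb: "E \<bullet> b = 0" and zb: "z \<bullet> b \<le> 0"
  shows "in_open_cone (bracket_step L w b) E z"
proof -
  have "z \<in> hcone_open (reval (bracket_step L w b)) E"
    unfolding hcone_open_def eigenvalues_def
  proof (intro CollectI ballI)
    fix t assume "t \<in> {t. reval (bracket_step L w b) (t *\<^sub>R E - z) = 0}"
    then have "reval L (t *\<^sub>R E - z) + (z \<bullet> b) * reval (mpoly_deriv L w) (t *\<^sub>R E - z) = 0"
      by (simp add: reval_bracket_step[OF b] inner_diff_left Eb)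
    then show "t > 0" by (rule bracket_step_root_pos[OF V H z w zb])
  qed
  then show ?thesis
    using in_open_cone_iff[OF hyperbolic_mpoly_bracket_step[OF V H w b Eb]] by blast
qed

section \<open>Homogeneous polynomial functions\<close>

lemma reval_map_monomials: "reval (map (\<lambda>\<alpha>. (C \<alpha>, \<alpha>)) xs) x = (\<Sum>\<alpha>\<leftarrow>xs. C \<alpha> * monomial \<alpha> (\<lambda>b. x \<bullet> b))"
  by (induction xs) auto

lemma homog_poly_fun_obtain_mpoly:
  assumes "homog_poly_fun d (f :: 'a::euclidean_space \<Rightarrow> real)"
  shows "\<exists>L. homogeneous_mpoly L d \<and> f = reval L"
proof -
  obtain c :: "('a \<Rightarrow> nat) \<Rightarrow> real" where fin: "finite {\<alpha>. c \<alpha> \<noteq> 0}"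
    and v: "\<forall>\<alpha>. c \<alpha> \<noteq> 0 \<longrightarrow> (\<forall>b. b \<notin> Basis \<longrightarrow> \<alpha> b = 0) \<and> (\<Sum>b\<in>Basis. \<alpha> b) = d"
    and f: "\<forall>x. f x = (\<Sum>\<alpha>\<in>{\<alpha>. c \<alpha> \<noteq> 0}. c \<alpha> * (\<Prod>b\<in>Basis. (x \<bullet> b) ^ \<alpha> b))"
    using assms unfolding homog_poly_fun_def by blast
  obtain xs where xs: "distinct xs" "set xs = {\<alpha>. c \<alpha> \<noteq> 0}" using finite_distinct_list[OF fin]
    by blast
  define L where "L = map (\<lambda>\<alpha>. (c \<alpha>, \<alpha>)) xs"
  have "homogeneous_mpoly L d" using v xs by (auto simp: L_def homogeneous_mpoly_def)
  moreover have "f = reval L"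
  proof
    fix x
    have "reval L x = (\<Sum>\<alpha>\<leftarrow>xs. c \<alpha> * monomial \<alpha> (\<lambda>b. x \<bullet> b))"
      by (simp add: L_def reval_map_monomials)
    also have "\<dots> = (\<Sum>\<alpha>\<in>{\<alpha>. c \<alpha> \<noteq> 0}. c \<alpha> * monomial \<alpha> (\<lambda>b. x \<bullet> b))"
      using xs by (simp add: sum_list_distinct_conv_sum_set)
    finally show "f x = reval L x" using f by (simp add: monomial_def)
  qed
  ultimately show ?thesis by blast
qed

(* homog_poly_fun requires exponents that vanish off Basis, which term lists need not have. *)
definition trim_exponent :: "('a::euclidean_space \<Rightarrow> nat) \<Rightarrow> 'a \<Rightarrow> nat" where
  "trim_exponent \<alpha> = (\<lambda>b. if b \<in> Basis then \<alpha> b else 0)"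

lemma monomial_trim_exponent: "monomial (trim_exponent \<alpha>) X = monomial \<alpha> X"
  unfolding monomial_def trim_exponent_def by (intro prod.cong) auto

lemma sum_trim_exponent: "(\<Sum>b\<in>Basis. trim_exponent \<alpha> b) = (\<Sum>b\<in>Basis. \<alpha> b)"
  unfolding trim_exponent_def by (intro sum.cong) auto

definition coeff_mpoly :: "'a::euclidean_space mpoly \<Rightarrow> ('a \<Rightarrow> nat) \<Rightarrow> real" where
  "coeff_mpoly L \<beta> = (\<Sum>(c,\<alpha>)\<leftarrow>L. if trim_exponent \<alpha> = \<beta> then c else 0)"

lemma coeff_mpoly_Cons: "coeff_mpoly ((c,\<alpha>)#L) \<beta> = (if trim_exponent \<alpha> = \<beta> then c else 0)
    + coeff_mpoly L \<beta>"
  by (simp add: coeff_mpoly_def)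

lemma coeff_mpoly_nz: "coeff_mpoly L \<beta> \<noteq> 0 \<Longrightarrow> \<exists>(c,\<alpha>)\<in>set L. c \<noteq> 0 \<and> trim_exponent \<alpha> = \<beta>"
proof (induction L)
  case Nil then show ?case by (simp add: coeff_mpoly_def)
next
  case (Cons a L)
  obtain c \<alpha> where a: "a = (c, \<alpha>)" by fastforce
  show ?case using Cons by (cases "trim_exponent \<alpha> = \<beta> \<and> c \<noteq> 0")
      (auto simp: a coeff_mpoly_Cons split: if_splits)
qed

lemma reval_eq_sum_coeff_mpoly:
  assumes "finite K" "\<forall>(c,\<alpha>)\<in>set L. trim_exponent \<alpha> \<in> K"
  shows "reval L x = (\<Sum>\<beta>\<in>K. coeff_mpoly L \<beta> * monomial \<beta> (\<lambda>b. x \<bullet> b))"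
  using assms(2)
proof (induction L)
  case Nil then show ?case by (simp add: coeff_mpoly_def)
next
  case (Cons a L)
  obtain c \<alpha> where a: "a = (c, \<alpha>)" by fastforce
  have inK: "trim_exponent \<alpha> \<in> K" using Cons.prems by (auto simp: a)
  have "(\<Sum>\<beta>\<in>K. coeff_mpoly (a # L) \<beta> * monomial \<beta> (\<lambda>b. x \<bullet> b))
      = (\<Sum>\<beta>\<in>K. (if trim_exponent \<alpha> = \<beta> then c * monomial \<beta> (\<lambda>b. x \<bullet> b) else 0))
          + (\<Sum>\<beta>\<in>K. coeff_mpoly L \<beta> * monomial \<beta> (\<lambda>b. x \<bullet> b))"
    unfolding sum.distrib[symmetric] by (intro sum.cong refl) (simp add: a coeff_mpoly_Cons distrib_right)
  also have "(\<Sum>\<beta>\<in>K. (if trim_exponent \<alpha> = \<beta> then c * monomial \<beta> (\<lambda>b. x \<bullet> b) else 0))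
      = c * monomial \<alpha> (\<lambda>b. x \<bullet> b)"
    using assms(1) inK by (simp add: sum.delta monomial_trim_exponent)
  finally show ?case using Cons by (simp add: a)
qed

lemma homog_poly_fun_reval:
  assumes V: "homogeneous_mpoly L d"
  shows "homog_poly_fun d (reval L)"
proof -
  define K where "K = trim_exponent ` snd ` set L"
  have fK: "finite K" by (simp add: K_def)
  have supp: "{\<beta>. coeff_mpoly L \<beta> \<noteq> 0} \<subseteq> K"
    using coeff_mpoly_nz by (force simp: K_def)
  have fs: "finite {\<beta>. coeff_mpoly L \<beta> \<noteq> 0}" using finite_subset[OF supp fK] .
  have vs: "(\<forall>b. b \<notin> Basis \<longrightarrow> \<beta> b = 0) \<and> (\<Sum>b\<in>Basis. \<beta> b) = d" if "coeff_mpoly L \<beta> \<noteq> 0" for \<beta>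
  proof -
    from coeff_mpoly_nz[OF that] obtain p where p: "p \<in> set L"
        "case p of (c, \<alpha>) \<Rightarrow> c \<noteq> 0 \<and> trim_exponent \<alpha> = \<beta>"
      by blast
    obtain c \<alpha> where p0: "p = (c, \<alpha>)" by fastforce
    have m: "(c, \<alpha>) \<in> set L" "c \<noteq> 0" "trim_exponent \<alpha> = \<beta>" using p by (auto simp: p0)
    have "(\<Sum>b\<in>Basis. \<alpha> b) = d" using V m by (auto simp: homogeneous_mpoly_def)
    then show ?thesis using m sum_trim_exponent[of \<alpha>] by (auto simp: trim_exponent_def)
  qed
  have eq: "reval L x =
      (\<Sum>\<beta>\<in>{\<beta>. coeff_mpoly L \<beta> \<noteq> 0}. coeff_mpoly L \<beta> * (\<Prod>b\<in>Basis. (x \<bullet> b) ^ \<beta> b))" for x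
  proof -
    have "reval L x = (\<Sum>\<beta>\<in>K. coeff_mpoly L \<beta> * monomial \<beta> (\<lambda>b. x \<bullet> b))"
      by (rule reval_eq_sum_coeff_mpoly[OF fK]) (force simp: K_def)
    also have "\<dots> = (\<Sum>\<beta>\<in>{\<beta>. coeff_mpoly L \<beta> \<noteq> 0}. coeff_mpoly L \<beta> * monomial \<beta> (\<lambda>b. x \<bullet> b))"
      by (rule sum.mono_neutral_right[OF fK supp]) auto
    finally show ?thesis by (simp add: monomial_def)
  qed
  show ?thesis unfolding homog_poly_fun_def
    by (intro exI[of _ "coeff_mpoly L"] conjI fs allI impI eq vs) (auto dest: vs)
qed

lemma poly_map_poly_of_real_eigenline:
  assumes "\<And>t. poly p t = reval L (t *\<^sub>R E - x)"
  shows "poly (map_poly of_real p) \<zeta> = ceval L (\<lambda>k. \<zeta> * ccoords E k - ccoords x k)"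
proof -
  have "poly (map_poly of_real p) \<zeta> = ceval L (\<lambda>b. ccoords (- x) b + \<zeta> * ccoords E b)"
    by (rule poly_map_poly_of_real_line) (simp add: assms algebra_simps)
  also have "\<dots> = ceval L (\<lambda>k. \<zeta> * ccoords E k - ccoords x k)"
    by (rule ceval_cong) (simp add: ccoords_def)
  finally show ?thesis .
qed

lemma hyperbolic_reval_iff:
  assumes "homogeneous_mpoly L d"
  shows "hyperbolic (reval L) E \<longleftrightarrow> hyperbolic_mpoly L E"
proof
  assume hyp: "hyperbolic (reval L) E"
  show "hyperbolic_mpoly L E" unfolding hyperbolic_mpoly_def
  proof (intro conjI allI impI)
    show "reval L E \<noteq> 0" using hyp by (simp add: hyperbolic_def)
    fix x \<zeta> assume r: "ceval L (\<lambda>k. \<zeta> * ccoords E k - ccoords x k) = 0"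
    obtain p :: "real poly" where p: "\<And>t. poly p t = reval L (t *\<^sub>R E - x)"
      and roots: "\<forall>z::complex. poly (map_poly complex_of_real p) z = 0 \<longrightarrow> z \<in> \<real>"
      using hyp unfolding hyperbolic_def by blast
    show "Im \<zeta> = 0"
      using roots r poly_map_poly_of_real_eigenline[OF p, of \<zeta>] by (simp add: complex_is_Real_iff)
  qed
next
  assume H: "hyperbolic_mpoly L E"
  show "hyperbolic (reval L) E" unfolding hyperbolic_def
  proof (intro conjI allI)
    show "\<exists>d. homog_poly_fun d (reval L)" using homog_poly_fun_reval[OF assms] by blast
    show "reval L E \<noteq> 0" using H by (simp add: hyperbolic_mpoly_def)
    fix x
    have p: "poly (line_rpoly L (- x) E) t = reval L (t *\<^sub>R E - x)" for t
      by (simp add: poly_line_rpoly algebra_simps)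
    show "\<exists>p. (\<forall>t. poly p t = reval L (t *\<^sub>R E - x)) \<and>
        (\<forall>z. poly (map_poly complex_of_real p) z = 0 \<longrightarrow> z \<in> \<real>)"
      using H poly_map_poly_of_real_eigenline[OF p]
      by (intro exI[of _ "line_rpoly L (- x) E"]) (auto simp: p hyperbolic_mpoly_def complex_is_Real_iff)
  qed
qed

section \<open>Adjoining variables\<close>

definition lift_exponent :: "('a::euclidean_space \<Rightarrow> nat) \<Rightarrow> ('a \<times> 'b::euclidean_space) \<Rightarrow> nat" where
  "lift_exponent \<alpha> = (\<lambda>p. if p \<in> (\<lambda>b. (b, 0)) ` Basis then \<alpha> (fst p) else 0)"

definition lift_mpoly :: "'a::euclidean_space mpoly \<Rightarrow> ('a \<times> 'b::euclidean_space) mpoly" where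
  "lift_mpoly L = map (\<lambda>(c,\<alpha>). (c, lift_exponent \<alpha>)) L"

lemma lift_exponent_left: "b \<in> Basis \<Longrightarrow> lift_exponent \<alpha> (b, 0) = \<alpha> b"
  by (auto simp: lift_exponent_def)

lemma lift_exponent_right: "b \<in> Basis \<Longrightarrow> lift_exponent \<alpha> ((0::'a::euclidean_space), b) = 0"
  by (auto simp: lift_exponent_def)

lemma Basis_prod_split:
  "(Basis :: ('a::euclidean_space \<times> 'b::euclidean_space) set)
      = (\<lambda>b. (b, 0)) ` Basis \<union> (\<lambda>b. (0, b)) ` Basis"
  "(\<lambda>b. (b, 0)) ` (Basis :: 'a set) \<inter> (\<lambda>b. (0::'a, b)) ` (Basis :: 'b set) = {}"
  by (auto simp: Basis_prod_def)

lemma prod_Basis_prod: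
  fixes f :: "'a::euclidean_space \<times> 'b::euclidean_space \<Rightarrow> 'c::comm_monoid_mult"
  shows "(\<Prod>p\<in>Basis. f p) = (\<Prod>b\<in>Basis. f (b, 0)) * (\<Prod>b\<in>Basis. f (0, b))"
proof -
  have "(\<Prod>p\<in>Basis. f p) = (\<Prod>p\<in>(\<lambda>b. (b, 0)) ` Basis. f p) * (\<Prod>p\<in>(\<lambda>b. (0, b)) ` Basis. f p)"
    unfolding Basis_prod_split(1) by (rule prod.union_disjoint) (auto simp: Basis_prod_split(2))
  also have "\<dots> = (\<Prod>b\<in>Basis. f (b, 0)) * (\<Prod>b\<in>Basis. f (0, b))"
    by (subst prod.reindex, simp add: inj_on_def)+ (simp add: comp_def)
  finally show ?thesis .
qed

lemma sum_Basis_prod: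
  fixes f :: "'a::euclidean_space \<times> 'b::euclidean_space \<Rightarrow> 'c::comm_monoid_add"
  shows "(\<Sum>p\<in>Basis. f p) = (\<Sum>b\<in>Basis. f (b, 0)) + (\<Sum>b\<in>Basis. f (0, b))"
proof -
  have "(\<Sum>p\<in>Basis. f p) = (\<Sum>p\<in>(\<lambda>b. (b, 0)) ` Basis. f p) + (\<Sum>p\<in>(\<lambda>b. (0, b)) ` Basis. f p)"
    unfolding Basis_prod_split(1) by (rule sum.union_disjoint) (auto simp: Basis_prod_split(2))
  also have "\<dots> = (\<Sum>b\<in>Basis. f (b, 0)) + (\<Sum>b\<in>Basis. f (0, b))"
    by (subst sum.reindex, simp add: inj_on_def)+ (simp add: comp_def)
  finally show ?thesis .
qed

lemma monomial_lift_exponent: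
  fixes g :: "'a::euclidean_space \<times> 'b::euclidean_space \<Rightarrow> 'c::comm_ring_1"
  shows "monomial (lift_exponent \<alpha>) g = monomial \<alpha> (\<lambda>b. g (b, 0))"
  unfolding monomial_def prod_Basis_prod
  by (simp add: lift_exponent_left lift_exponent_right cong: prod.cong)

lemma sum_lift_exponent:
  "(\<Sum>p\<in>(Basis :: ('a::euclidean_space \<times> 'b::euclidean_space) set). lift_exponent \<alpha> p)
    = (\<Sum>b\<in>Basis. \<alpha> b)"
  unfolding sum_Basis_prod by (simp add: lift_exponent_left lift_exponent_right cong: sum.cong)

lemma reval_lift: "reval (lift_mpoly L :: ('a::euclidean_space \<times> 'b::euclidean_space) mpoly) z
    = reval L (fst z)"
proof (induction L)
  case (Cons a L)
  obtain c \<alpha> where a: "a = (c, \<alpha>)" by fastforce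
  have "monomial (lift_exponent \<alpha>) (\<lambda>p. z \<bullet> p) = monomial \<alpha> (\<lambda>b. fst z \<bullet> b)"
    by (cases z) (simp add: monomial_lift_exponent inner_Pair)
  then show ?case using Cons by (simp add: a lift_mpoly_def)
qed (simp add: lift_mpoly_def)

lemma ceval_lift: "ceval (lift_mpoly L :: ('a::euclidean_space \<times> 'b::euclidean_space) mpoly) g
    = ceval L (\<lambda>b. g (b, 0))"
  by (induction L) (auto simp: lift_mpoly_def monomial_lift_exponent)

lemma homogeneous_mpoly_lift: "homogeneous_mpoly L d
    \<Longrightarrow> homogeneous_mpoly (lift_mpoly L :: ('a::euclidean_space \<times> 'b::euclidean_space) mpoly) d"
  by (auto simp: homogeneous_mpoly_def lift_mpoly_def sum_lift_exponent)

lemma hyperbolic_mpoly_lift: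
  assumes "hyperbolic_mpoly L e"
  shows "hyperbolic_mpoly (lift_mpoly L :: ('a::euclidean_space \<times> 'b::euclidean_space) mpoly) (e, 0)"
  unfolding hyperbolic_mpoly_def
proof (intro conjI allI impI)
  show "reval (lift_mpoly L :: ('a \<times> 'b) mpoly) (e, 0) \<noteq> 0" using assms
    by (simp add: reval_lift hyperbolic_mpoly_def)
  fix x :: "'a \<times> 'b" and \<zeta>
  assume "ceval (lift_mpoly L) (\<lambda>k. \<zeta> * ccoords (e, 0) k - ccoords x k) = 0"
  moreover have "ceval (lift_mpoly L) (\<lambda>k. \<zeta> * ccoords (e, 0) k - ccoords x k)
      = ceval L (\<lambda>b. \<zeta> * ccoords e b - ccoords (fst x) b)"
    by (cases x) (simp add: ceval_lift ccoords_def inner_Pair)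
  ultimately show "Im \<zeta> = 0" using assms by (simp add: hyperbolic_mpoly_def)
qed

lemma hcone_open_reval_lift:
  "hcone_open (reval (lift_mpoly L :: ('a::euclidean_space \<times> 'b::euclidean_space) mpoly)) (e, 0)
    = hcone_open (reval L) e \<times> UNIV"
  by (auto simp: hcone_open_def eigenvalues_def reval_lift)

section \<open>The polynomial h[v_1, ..., v_m]\<close>

lemma hop_reval:
  fixes vs :: "'m::finite \<Rightarrow> real^'n"
  shows "hop vs j (reval L) = reval (bracket_step L (vs j, 0) (0, axis j 1))"
proof
  fix z :: "(real^'n) \<times> (real^'m)"
  have "(0, axis j 1) \<in> (Basis :: ((real^'n) \<times> (real^'m)) set)"
    by (simp add: Basis_prod_def)
  moreover have "z \<bullet> (0, axis j 1) = snd z $ j"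
    by (cases z) (simp add: inner_Pair inner_axis)
  ultimately show "hop vs j (reval L) z = reval (bracket_step L (vs j, 0) (0, axis j 1)) z"
    by (simp add: hop_def frechet_derivative_reval reval_bracket_step)
qed

lemma foldr_hop_hyperbolic:
  fixes L0 :: "(real^'n) mpoly" and vs :: "'m::finite \<Rightarrow> real^'n"
  assumes V0: "homogeneous_mpoly L0 d" and H0: "hyperbolic_mpoly L0 e"
    and vs: "\<forall>j. vs j \<in> hcone_closed (reval L0) e"
  shows "\<exists>L. homogeneous_mpoly L d \<and> foldr (hop vs) l (\<lambda>z. reval L0 (fst z)) = reval L
    \<and> hyperbolic_mpoly L (e, 0) \<and> (\<forall>x. reval L (x, 0) = reval L0 x)
    \<and> (\<forall>z y. z \<in> hcone_open (reval L0) e \<longrightarrow> (\<forall>j. y $ j \<le> 0) \<longrightarrow> in_open_cone L (e, 0) (z, y))"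
proof (induction l)
  case Nil
  have H: "hyperbolic_mpoly (lift_mpoly L0 :: ((real^'n) \<times> (real^'m)) mpoly) (e, 0)"
    by (rule hyperbolic_mpoly_lift[OF H0])
  show ?case
    by (intro exI[of _ "lift_mpoly L0"] conjI allI impI homogeneous_mpoly_lift[OF V0] H)
      (auto simp: reval_lift in_open_cone_iff[OF H] hcone_open_reval_lift)
next
  case (Cons j l)
  then obtain L where V: "homogeneous_mpoly L d"
    and FL: "foldr (hop vs) l (\<lambda>z. reval L0 (fst z)) = reval L" and H: "hyperbolic_mpoly L (e, 0)"
    and L0: "\<forall>x. reval L (x, 0) = reval L0 x"
    and cone: "\<forall>z y. z \<in> hcone_open (reval L0) e \<longrightarrow> (\<forall>j. y $ j \<le> 0) \<longrightarrow> in_open_cone L (e, 0) (z, y)"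
    by blast
  define b :: "(real^'n) \<times> (real^'m)" where "b = (0, axis j 1)"
  have b: "b \<in> Basis" "(e, 0) \<bullet> b = 0" and zb: "(z, y) \<bullet> b = y $ j" for z y
    by (simp_all add: b_def Basis_prod_def inner_Pair inner_axis)
  have "(vs j, 0) \<in> hcone_closed (reval L) (e, 0)"
    using vs L0 by (simp add: hcone_closed_def eigenvalues_def)
  then have w: "in_closed_cone L (e, 0) (vs j, 0)" using in_closed_cone_iff[OF H] by blast
  show ?case
  proof (intro exI[of _ "bracket_step L (vs j, 0) b"] conjI allI impI)
    show "homogeneous_mpoly (bracket_step L (vs j, 0) b) d"
      by (rule homogeneous_mpoly_bracket_step[OF V b(1)])
    show "foldr (hop vs) (j # l) (\<lambda>z. reval L0 (fst z)) = reval (bracket_step L (vs j, 0) b)"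
      by (simp add: FL hop_reval b_def)
    show "hyperbolic_mpoly (bracket_step L (vs j, 0) b) (e, 0)"
      by (rule hyperbolic_mpoly_bracket_step[OF V H w b])
    show "reval (bracket_step L (vs j, 0) b) (x, 0) = reval L0 x" for x
      using L0 zb[of x 0] by (simp add: reval_bracket_step[OF b(1)])
    fix z and y :: "real^'m"
    assume "z \<in> hcone_open (reval L0) e" and "\<forall>j. y $ j \<le> 0"
    then show "in_open_cone (bracket_step L (vs j, 0) b) (e, 0) (z, y)"
      using in_open_cone_bracket_step[OF V H _ w b] cone zb by simp
  qed
qed

theorem theorem3p3:
  fixes h :: "real^'n \<Rightarrow> real" and e :: "real^'n" and vs :: "'m::finite \<Rightarrow> real^'n"
  assumes "hyperbolic h e"
    and "\<forall>j. vs j \<in> hcone_closed h e"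
  shows "hyperbolic (hbracket h vs) (e, 0)
    \<and> hcone_open h e \<times> {y :: real^'m. \<forall>j. y $ j \<le> 0} \<subseteq> hcone_open (hbracket h vs) (e, 0)"
proof -
  obtain d where "homog_poly_fun d h" using assms(1) by (auto simp: hyperbolic_def)
  then obtain L0 where V0: "homogeneous_mpoly L0 d" and h: "h = reval L0"
    using homog_poly_fun_obtain_mpoly by blast
  have H0: "hyperbolic_mpoly L0 e" using assms(1) V0 by (simp add: h hyperbolic_reval_iff)
  obtain L where V: "homogeneous_mpoly L d" and H: "hyperbolic_mpoly L (e, 0)"
    and hb: "hbracket h vs = reval L"
    and cone: "\<forall>z y. z \<in> hcone_open h e \<longrightarrow> (\<forall>j. y $ j \<le> 0) \<longrightarrow> in_open_cone L (e, 0) (z, y)"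
    using foldr_hop_hyperbolic[OF V0 H0, of vs "SOME l. distinct l \<and> set l = UNIV"] assms(2)
    by (auto simp: h hbracket_def)
  have "hyperbolic (reval L) (e, 0)" using V H by (simp add: hyperbolic_reval_iff)
  moreover have "hcone_open h e \<times> {y. \<forall>j. y $ j \<le> 0} \<subseteq> hcone_open (reval L) (e, 0)"
    using cone in_open_cone_iff[OF H] by blast
  ultimately show ?thesis by (simp add: hb)
qed

end
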